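(* Let $1<p<\infty$, $0<\theta<1$, $1\le r<\infty$, and $t_k=2^{1-2^k}$ for $k\in\{0,1,2,\dots\}$. Then for all $f\in\bigl(L^{p)}(\Omega),L^{(p}(\Omega)\bigr)_{\theta,r}$, $$\|f\|^r_{(L^{p)},L^{(p})_{\theta,r}}\approx\sum_{k=0}^{\infty}2^{kr(\theta-\frac1p)}\Bigl(\int_{t_{k+1}}^{t_k}f_*^p(y)dy\Bigr)^{r/p},$$ with constants independent of $f$.
   Context: $\Omega\subset\mathbb R^n$ is a bounded open set with $|\Omega|=1$; $f_*$ is the decreasing rearrangement of $|f|$ on $(0,1)$; $\log$ is the natural logarithm. Grand Lebesgue space $L^{p)}(\Omega)$: measurable $f$ with $\|f\|_{p)}=\sup_{0<t<1}(1-\log t)^{-1/p}(\int_t^1 f_*^p)^{1/p}<\infty$. Small Lebesgue space $L^{(p}(\Omega)$: measurable $f$ with $\|f\|_{(p}=\int_0^1(1-\log t)^{-1/p}(\int_0^t f_*^p)^{1/p}\frac{dt}{t}<\infty$. K-functional: $K(g,t;X_0,X_1)=\inf_{g=g_0+g_1}(\|g_0\|_{X_0}+t\|g_1\|_{X_1})$; $(X_0,X_1)_{\theta,r}$ is the set of $g\in X_0+X_1$ with $\|g\|=\bigl(\int_0^1[t^{-\theta}K(g,t)]^r\frac{dt}{t}\bigr)^{1/r}<\infty$ (only $t\in(0,1)$ used). *)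

theory Defs
  imports "HOL-Analysis.Analysis"
begin

text \<open>Real power of an extended nonnegative real (exponent meant to be positive);
  the value \<infinity> is mapped to \<infinity>.\<close>
definition enn_powr :: "ennreal \<Rightarrow> real \<Rightarrow> ennreal" where
  "enn_powr x a = (if x = \<infinity> then \<infinity> else ennreal (enn2real x powr a))"

text \<open>Decreasing rearrangement of |f| on \<Omega> (with |\<Omega>| = 1), as a function on (0,1).\<close>
definition dec_rearr :: "'a::euclidean_space set \<Rightarrow> ('a \<Rightarrow> real) \<Rightarrow> real \<Rightarrow> real" where
  "dec_rearr \<Omega> f s = Inf {y::real. 0 \<le> y \<and> measure lebesgue {x\<in>\<Omega>. \<bar>f x\<bar> > y} \<le> s}"

definition grand_norm :: "'a::euclidean_space set \<Rightarrow> real \<Rightarrow> ('a \<Rightarrow> real) \<Rightarrow> ennreal" where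
  "grand_norm \<Omega> p f = (SUP t\<in>{0<..<1::real}.
      ennreal ((1 - ln t) powr (-1/p)) *
      enn_powr (\<integral>\<^sup>+ s\<in>{t..1}. ennreal (dec_rearr \<Omega> f s powr p) \<partial>lborel) (1/p))"

definition small_norm :: "'a::euclidean_space set \<Rightarrow> real \<Rightarrow> ('a \<Rightarrow> real) \<Rightarrow> ennreal" where
  "small_norm \<Omega> p f = (\<integral>\<^sup>+ t\<in>{0<..<1::real}.
      ennreal ((1 - ln t) powr (-1/p)) *
      enn_powr (\<integral>\<^sup>+ s\<in>{0<..t}. ennreal (dec_rearr \<Omega> f s powr p) \<partial>lborel) (1/p)
      * ennreal (1 / t) \<partial>lborel)"

definition grand_space :: "'a::euclidean_space set \<Rightarrow> real \<Rightarrow> ('a \<Rightarrow> real) set" where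
  "grand_space \<Omega> p = {f. f \<in> borel_measurable (lebesgue_on \<Omega>) \<and> grand_norm \<Omega> p f < \<infinity>}"

definition small_space :: "'a::euclidean_space set \<Rightarrow> real \<Rightarrow> ('a \<Rightarrow> real) set" where
  "small_space \<Omega> p = {f. f \<in> borel_measurable (lebesgue_on \<Omega>) \<and> small_norm \<Omega> p f < \<infinity>}"

definition K_fun :: "'a::euclidean_space set \<Rightarrow> real \<Rightarrow> ('a \<Rightarrow> real) \<Rightarrow> real \<Rightarrow> ennreal" where
  "K_fun \<Omega> p g t = (INF gs \<in> {(g0, g1). g0 \<in> grand_space \<Omega> p \<and> g1 \<in> small_space \<Omega> p \<and>
        (\<forall>x\<in>\<Omega>. g x = g0 x + g1 x)}.
      grand_norm \<Omega> p (fst gs) + ennreal t * small_norm \<Omega> p (snd gs))"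

definition sum_space :: "'a::euclidean_space set \<Rightarrow> real \<Rightarrow> ('a \<Rightarrow> real) set" where
  "sum_space \<Omega> p = {g. \<exists>g0 g1. g0 \<in> grand_space \<Omega> p \<and> g1 \<in> small_space \<Omega> p \<and>
        (\<forall>x\<in>\<Omega>. g x = g0 x + g1 x)}"

text \<open>Interpolation norm (only t in (0,1) used).\<close>
definition interp_norm :: "'a::euclidean_space set \<Rightarrow> real \<Rightarrow> real \<Rightarrow> real \<Rightarrow> ('a \<Rightarrow> real) \<Rightarrow> ennreal" where
  "interp_norm \<Omega> p \<theta> r g = enn_powr (\<integral>\<^sup>+ t\<in>{0<..<1::real}.
      enn_powr (ennreal (t powr (-\<theta>)) * K_fun \<Omega> p g t) r * ennreal (1 / t) \<partial>lborel) (1/r)"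

definition interp_space :: "'a::euclidean_space set \<Rightarrow> real \<Rightarrow> real \<Rightarrow> real \<Rightarrow> ('a \<Rightarrow> real) set" where
  "interp_space \<Omega> p \<theta> r = {g \<in> sum_space \<Omega> p. interp_norm \<Omega> p \<theta> r g < \<infinity>}"

end

(*
  With t_k = 2^(1 - 2^k) the logarithmic weight (1 - log t)^(-1/p) is comparable to 2^(-k/p)
  on [t_(k+1), t_k], so both Lebesgue norms of a function are governed by the dyadic blocks
  b_k = (int_(t_(k+1))^(t_k) f_*^p)^(1/p), and the K-functional at t ~ 2^-k by the blocks
  near index k.

  Lower bound: for any splitting f = g0 + g1 one has f_*(s) <= g0_*(s/2) + g1_*(s/2), which
  gives 2^(-k/p) b_k <= 24 (|g0|_{p)} + 2^-k |g1|_{(p}), hence 2^(-k/p) b_k <~ K(f, t) for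
  t in [2^(-k-1), 2^-k); integrating t^(-theta r) K(f,t)^r dt/t over these intervals yields
  the lower estimate.

  Upper bound: cutting f at height f_*(t_k) gives a splitting with
  |g0|_{p)} <~ sum_(i >= k) 2^(-i/p) b_i and |g1|_{(p} <~ sum_(i <= k) 2^(i(1-1/p)) b_i.
  After multiplication by 2^(k theta) these are geometric convolutions of the sequence
  2^(i(theta-1/p)) b_i with ratios 2^-theta and 2^(theta-1), both < 1, so a discrete Hardy
  inequality bounds their l^r norms by that of the sequence itself.
*)
theory Submission
  imports Defs
begin

lemma powr_add_le_two_powr:
  fixes x y p :: real
  assumes "0 \<le> x" "0 \<le> y" "0 \<le> p"
  shows "(x + y) powr p \<le> 2 powr p * (x powr p + y powr p)"
proof -
  have "(x + y) powr p \<le> (2 * max x y) powr p"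
    using assms by (intro powr_mono2) auto
  also have "\<dots> = 2 powr p * max x y powr p" using assms by (simp add: powr_mult)
  also have "max x y powr p \<le> x powr p + y powr p"
    by (cases "x \<le> y") (auto simp: max_def)
  finally show ?thesis by (simp add: mult_left_mono)
qed

lemma powr_add_le_add_powr:
  fixes x y q :: real
  assumes "0 \<le> x" "0 \<le> y" "0 < q" "q \<le> 1"
  shows "(x + y) powr q \<le> x powr q + y powr q"
proof (cases "x + y = 0")
  case False
  then have s: "0 < x + y" using assms by simp
  have le_powr: "u \<le> u powr q" if "0 \<le> u" "u \<le> 1" for u :: real
  proof (cases "u = 0")
    case False
    then have "u powr 1 \<le> u powr q" using that assms by (intro powr_mono') auto
    then show ?thesis using False that by simp
  qed simp
  have "1 = x / (x + y) + y / (x + y)" using s by (simp add: add_divide_distrib[symmetric])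
  also have "\<dots> \<le> (x / (x + y)) powr q + (y / (x + y)) powr q"
    using assms s by (intro add_mono le_powr) auto
  also have "\<dots> = (x powr q + y powr q) / (x + y) powr q"
    by (simp add: powr_divide add_divide_distrib)
  finally show ?thesis using s by (simp add: le_divide_eq)
qed (use assms in simp)

lemma powr_sum_le_sum_powr:
  fixes q :: real
  assumes "\<And>i. i \<in> A \<Longrightarrow> 0 \<le> g i" "0 < q" "q \<le> 1"
  shows "(\<Sum>i\<in>A. g i) powr q \<le> (\<Sum>i\<in>A. g i powr q)"
  using assms(1)
proof (induction A rule: infinite_finite_induct)
  case (insert a A)
  have "(\<Sum>i\<in>insert a A. g i) powr q = (g a + (\<Sum>i\<in>A. g i)) powr q" using insert by simp
  also have "\<dots> \<le> g a powr q + (\<Sum>i\<in>A. g i) powr q"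
    using insert assms by (intro powr_add_le_add_powr sum_nonneg) auto
  also have "\<dots> \<le> g a powr q + (\<Sum>i\<in>A. g i powr q)" using insert by auto
  finally show ?case using insert by simp
qed (use assms in auto)

lemma le_one_add_powr:
  fixes z r :: real
  assumes "0 \<le> z" "1 \<le> r"
  shows "z \<le> 1 + z powr r"
proof (cases "z \<le> 1")
  case False
  then have "z powr 1 \<le> z powr r" using assms by (intro powr_mono) auto
  then show ?thesis using False by simp
qed (simp add: add_increasing2)

lemma sum_power_le_geometric:
  fixes a :: real
  assumes "1 < a"
  shows "(\<Sum>j\<le>i. a ^ j) \<le> a / (a - 1) * a ^ i"
proof (induction i)
  case (Suc i)
  then have "(\<Sum>j\<le>Suc i. a ^ j) \<le> a / (a - 1) * a ^ i + a ^ Suc i" by simp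
  also have "\<dots> = a / (a - 1) * a ^ Suc i" using assms by (simp add: field_simps)
  finally show ?case .
qed (use assms in \<open>simp add: field_simps\<close>)

lemma powr_power_comm:
  fixes d r :: real
  assumes "0 \<le> d"
  shows "(d ^ m) powr r = (d powr r) ^ m"
proof (cases "d = 0")
  case False
  then have "(d ^ m) powr r = d powr (r * real m)" using assms by (simp add: powr_realpow[symmetric] powr_powr mult.commute)
  also have "\<dots> = (d powr r) ^ m" using False by (simp add: powr_power mult.commute)
  finally show ?thesis .
qed (cases m, auto)

lemma powr_root_sum_le:
  fixes A B b p :: real
  assumes "0 \<le> A" "0 \<le> B" "1 \<le> p" "0 \<le> b" "b \<le> 2 powr (p + 1) * (A powr p + B powr p)"
  shows "b powr (1/p) \<le> 4 * (A + B)"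
proof -
  have p: "0 < 1/p" "1/p \<le> 1" using assms(3) by auto
  have two: "2 powr (1/p) \<le> (2::real)" using powr_mono[of "1/p" 1 "2::real"] p by simp
  have "b powr (1/p) \<le> (2 powr (p + 1) * (A powr p + B powr p)) powr (1/p)"
    using assms p by (intro powr_mono2) auto
  also have "\<dots> = 2 * 2 powr (1/p) * (A powr p + B powr p) powr (1/p)"
    using assms(3) by (simp add: powr_mult powr_powr add_divide_distrib powr_add)
  also have "\<dots> \<le> 2 * 2 powr (1/p) * (A + B)"
  proof (intro mult_left_mono)
    have "(A powr p + B powr p) powr (1/p) \<le> (A powr p) powr (1/p) + (B powr p) powr (1/p)"
      using p by (intro powr_add_le_add_powr) auto
    then show "(A powr p + B powr p) powr (1/p) \<le> A + B"
      using assms by (simp add: powr_powr)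
  qed auto
  also have "\<dots> \<le> 4 * (A + B)"
    using two assms(1,2) by (intro mult_right_mono) auto
  finally show ?thesis .
qed

lemma log_weight_powr_le:
  fixes c p u :: real
  assumes "0 \<le> c" "1 \<le> p" "1 \<le> u"
  shows "u powr (-1/p) * (1 + c * u) powr (1/p) \<le> 1 + c"
proof -
  have "(1 + c * u) powr (1/p) \<le> ((1 + c) * u) powr (1/p)"
    using assms by (intro powr_mono2) (auto simp: algebra_simps)
  also have "\<dots> = (1 + c) powr (1/p) * u powr (1/p)"
    using assms by (simp add: powr_mult)
  also have "(1 + c) powr (1/p) \<le> 1 + c"
    using powr_mono[of "1/p" 1 "1 + c"] assms by simp
  finally have "(1 + c * u) powr (1/p) \<le> (1 + c) * u powr (1/p)"
    using assms by (smt (verit) mult_right_mono powr_ge_zero)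
  then have "u powr (-1/p) * (1 + c * u) powr (1/p) \<le> u powr (-1/p) * ((1 + c) * u powr (1/p))"
    by (intro mult_left_mono) auto
  also have "\<dots> = 1 + c"
    using assms by (simp add: powr_minus field_simps)
  finally show ?thesis .
qed

lemma log_weights_le:
  fixes p u :: real
  assumes p: "1 \<le> p" and u: "1 \<le> u"
  shows "u powr (-1/p) * (1 + 2 * u * ln 2) powr (1/p) \<le> 3"
    and "u powr (-1/p) * ((1 + u * ln 2) powr (1/p) / (ln (7/8) + u * ln 2)) \<le> 6 / u"
    and "0 < ln (7/8) + u * ln 2"
proof -
  have ln2: "1/2 \<le> ln (2::real)" "ln (2::real) \<le> 1"
    using ln2_ge_two_thirds ln_2_less_1 by auto
  have "u powr (-1/p) * (1 + (2 * ln 2) * u) powr (1/p) \<le> 1 + 2 * ln 2"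
    by (rule log_weight_powr_le) (use ln2 p u in auto)
  then show "u powr (-1/p) * (1 + 2 * u * ln 2) powr (1/p) \<le> 3"
    using ln2 by (simp add: mult_ac)
  have "- (1/7) \<le> ln (7/8::real)" using ln_le_minus_one[of "8/7::real"] by (simp add: ln_div)
  moreover have "u / 2 \<le> u * ln 2" using mult_left_mono[OF ln2(1), of u] u by simp
  ultimately have L: "u / 3 \<le> ln (7/8) + u * ln 2" using u by linarith
  then show "0 < ln (7/8) + u * ln 2" using u by linarith
  have "u powr (-1/p) * (1 + (ln 2) * u) powr (1/p) \<le> 1 + ln 2"
    by (rule log_weight_powr_le) (use ln2 p u in auto)
  then have "u powr (-1/p) * (1 + u * ln 2) powr (1/p) \<le> 2"
    using ln2 by (simp add: mult_ac)
  moreover have "1 / (ln (7/8) + u * ln 2) \<le> 3 / u" using L u by (simp add: field_simps)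
  ultimately have "u powr (-1/p) * (1 + u * ln 2) powr (1/p) * (1 / (ln (7/8) + u * ln 2)) \<le> 2 * (3 / u)"
    using u L by (intro mult_mono) auto
  then show "u powr (-1/p) * ((1 + u * ln 2) powr (1/p) / (ln (7/8) + u * ln 2)) \<le> 6 / u"
    by simp
qed

lemma half_power_powr: "((1/2::real) ^ k) powr (- \<theta>) = (2 ^ k) powr \<theta>"
  by (simp add: power_divide powr_minus_divide powr_divide)

lemma two_power_powr: "((2::real) ^ n) powr a = 2 powr (real n * a)"
  by (simp add: powr_realpow[symmetric] powr_powr)

lemma two_powr_power: "((2::real) powr a) ^ n = 2 powr (a * real n)"
  by (simp add: powr_realpow[symmetric] powr_powr)

lemma two_powr_half_square: "((2::real) powr (a / 2)) ^ 2 = 2 powr a"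
  by (simp add: two_powr_power)

lemma tail_weight_eq:
  fixes \<theta> p x :: real
  assumes "k \<le> i"
  shows "(2 ^ k) powr \<theta> * ((2 ^ i) powr (-1/p) * x) = (2 powr (-\<theta>)) ^ (i - k) * ((2 ^ i) powr (\<theta> - 1/p) * x)"
proof -
  have "(2 ^ k) powr \<theta> * (2 ^ i) powr (-1/p) = (2::real) powr (real k * \<theta> + real i * (-1/p))"
    by (simp only: two_power_powr powr_add)
  also have "real k * \<theta> + real i * (-1/p) = (-\<theta>) * real (i - k) + real i * (\<theta> - 1/p)"
    using assms by (simp add: of_nat_diff algebra_simps)
  also have "(2::real) powr \<dots> = (2 powr (-\<theta>)) ^ (i - k) * (2 ^ i) powr (\<theta> - 1/p)"
    by (simp only: two_power_powr two_powr_power powr_add)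
  finally show ?thesis by (simp add: mult.assoc)
qed

lemma head_weight_eq:
  fixes \<theta> p x :: real
  assumes "i \<le> k"
  shows "(2 ^ k) powr \<theta> * (1/2) ^ k * ((2 ^ i) powr (1 - 1/p) * x)
    = (2 powr (\<theta> - 1)) ^ (k - i) * ((2 ^ i) powr (\<theta> - 1/p) * x)"
proof -
  have "(1/2::real) ^ k = 2 powr (- real k)"
    by (simp add: powr_minus_divide powr_realpow power_divide)
  then have "(2 ^ k) powr \<theta> * (1/2) ^ k * (2 ^ i) powr (1 - 1/p)
      = (2::real) powr (real k * \<theta> + - real k + real i * (1 - 1/p))"
    by (simp only: two_power_powr powr_add)
  also have "real k * \<theta> + - real k + real i * (1 - 1/p) = (\<theta> - 1) * real (k - i) + real i * (\<theta> - 1/p)"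
    using assms by (simp add: of_nat_diff algebra_simps)
  also have "(2::real) powr \<dots> = (2 powr (\<theta> - 1)) ^ (k - i) * (2 ^ i) powr (\<theta> - 1/p)"
    by (simp only: two_power_powr two_powr_power powr_add)
  finally show ?thesis by (simp add: mult.assoc)
qed

lemma sum_weighted_tails_le:
  fixes x :: "nat \<Rightarrow> real" and p :: real
  assumes x: "\<And>i. 0 \<le> x i" and p: "1 < p"
  shows "(\<Sum>j<k. 4 * (2 ^ j) powr (-1/p) * (\<Sum>i\<in>{j..k}. x i) * (2 ^ j * ln 2))
     \<le> 4 * (2 powr (1 - 1/p) / (2 powr (1 - 1/p) - 1)) * (\<Sum>i\<le>k. (2 ^ i) powr (1 - 1/p) * x i)"
proof -
  define a where "a = (2::real) powr (1 - 1/p)"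
  have a: "1 < a" unfolding a_def using p by (intro gr_one_powr) auto
  have pw: "((2::real) ^ j) powr (1 - 1/p) = a ^ j" for j
    by (simp add: a_def powr_realpow[symmetric] powr_powr mult.commute)
  have term_le: "4 * (2 ^ j) powr (-1/p) * (\<Sum>i\<in>{j..k}. x i) * (2 ^ j * ln 2) \<le> 4 * a ^ j * (\<Sum>i\<in>{j..k}. x i)" for j
  proof -
    have "((2::real) ^ j) powr (-1/p) * 2 ^ j = a ^ j"
      by (simp add: pw[symmetric] powr_diff powr_minus_divide field_simps)
    moreover have "ln 2 * (\<Sum>i\<in>{j..k}. x i) \<le> (\<Sum>i\<in>{j..k}. x i)"
      using x ln_2_less_1 by (intro mult_left_le_one_le sum_nonneg) auto
    then have "4 * a ^ j * (ln 2 * (\<Sum>i\<in>{j..k}. x i)) \<le> 4 * a ^ j * (\<Sum>i\<in>{j..k}. x i)"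
      using a by (intro mult_left_mono) auto
    ultimately show ?thesis by (simp add: mult_ac)
  qed
  have "(\<Sum>j<k. 4 * (2 ^ j) powr (-1/p) * (\<Sum>i\<in>{j..k}. x i) * (2 ^ j * ln 2))
      \<le> (\<Sum>j\<le>k. 4 * a ^ j * (\<Sum>i\<in>{j..k}. x i))"
    using term_le a x by (intro order.trans[OF sum_mono sum_mono2]) (auto intro!: sum_nonneg)
  also have "\<dots> = 4 * (\<Sum>j\<le>k. \<Sum>i\<in>{i\<in>{..k}. j \<le> i}. a ^ j * x i)"
  proof -
    have "{i\<in>{..k}. j \<le> i} = {j..k}" for j by auto
    then show ?thesis by (simp add: sum_distrib_left mult.assoc)
  qed
  also have "(\<Sum>j\<le>k. \<Sum>i\<in>{i\<in>{..k}. j \<le> i}. a ^ j * x i) = (\<Sum>i\<le>k. \<Sum>j\<in>{j\<in>{..k}. j \<le> i}. a ^ j * x i)"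
    by (rule sum.swap_restrict) auto
  also have "\<dots> = (\<Sum>i\<le>k. (\<Sum>j\<le>i. a ^ j) * x i)"
  proof (rule sum.cong)
    fix i assume "i \<in> {..k}"
    then have "{j\<in>{..k}. j \<le> i} = {..i}" by auto
    then show "(\<Sum>j\<in>{j\<in>{..k}. j \<le> i}. a ^ j * x i) = (\<Sum>j\<le>i. a ^ j) * x i" by (simp add: sum_distrib_right)
  qed simp
  also have "\<dots> \<le> (\<Sum>i\<le>k. a / (a - 1) * a ^ i * x i)"
    using sum_power_le_geometric[OF a] x by (intro sum_mono mult_right_mono) auto
  also have "\<dots> = a / (a - 1) * (\<Sum>i\<le>k. (2 ^ i) powr (1 - 1/p) * x i)"
    by (simp add: pw sum_distrib_left mult.assoc)
  finally show ?thesis using a by (simp add: a_def mult.assoc)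
qed

lemma enn_powr_ennreal [simp]: "0 \<le> x \<Longrightarrow> enn_powr (ennreal x) a = ennreal (x powr a)"
  by (simp add: enn_powr_def)

lemma enn_powr_top [simp]: "enn_powr top a = top"
  by (simp add: enn_powr_def)

lemma enn_powr_zero [simp]: "0 < a \<Longrightarrow> enn_powr 0 a = 0"
  using enn_powr_ennreal[of 0 a] by simp

lemma enn_powr_mono:
  assumes "0 \<le> a" "x \<le> y"
  shows "enn_powr x a \<le> enn_powr y a"
proof (cases y rule: ennreal_cases)
  case (real v)
  then obtain u where "x = ennreal u" "0 \<le> u" "u \<le> v"
    using assms(2) by (cases x rule: ennreal_cases) (auto simp: top_unique)
  then show ?thesis using real assms by (simp add: powr_mono2 ennreal_leI)
qed simp

lemma enn_powr_mult:
  assumes "0 < a"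
  shows "enn_powr (x * y) a = enn_powr x a * enn_powr y a"
proof (cases x rule: ennreal_cases)
  case (real u)
  show ?thesis
  proof (cases y rule: ennreal_cases)
    case top then show ?thesis using real assms
      by (cases "u = 0") (auto simp: ennreal_mult_top ennreal_top_mult)
  next
    case (real v) then show ?thesis using \<open>x = ennreal u\<close> \<open>0 \<le> u\<close>
      by (simp add: ennreal_mult[symmetric] powr_mult)
  qed
next
  case top
  show ?thesis
  proof (cases y rule: ennreal_cases)
    case (real v) then show ?thesis using top assms
      by (cases "v = 0") (auto simp: ennreal_mult_top ennreal_top_mult)
  qed (use top in simp)
qed

lemma enn_powr_powr:
  assumes "0 < a" "0 < b"
  shows "enn_powr (enn_powr x a) b = enn_powr x (a * b)"
  by (cases x rule: ennreal_cases) (use assms in \<open>simp_all add: powr_powr\<close>)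

lemma enn_powr_powr_inverse:
  assumes "0 < r"
  shows "enn_powr (enn_powr x (1/r)) r = x"
  using enn_powr_powr[of "1/r" r x] assms by (cases x rule: ennreal_cases) auto

lemma enn_powr_le_imp_le_root:
  assumes "0 < r" "enn_powr y r \<le> X"
  shows "y \<le> enn_powr X (1/r)"
proof -
  have "y = enn_powr (enn_powr y r) (1/r)"
    using enn_powr_powr_inverse[of "1/r" y] assms by simp
  also have "\<dots> \<le> enn_powr X (1/r)" using assms by (intro enn_powr_mono) auto
  finally show ?thesis .
qed

lemma mult_enn_powr_le_imp_le:
  assumes "0 < w" "0 < q" "0 \<le> G" "ennreal w * enn_powr X q \<le> ennreal G"
  shows "X \<le> ennreal ((G / w) powr (1/q))"
proof (cases X rule: ennreal_cases)
  case top
  then show ?thesis using assms by (simp add: ennreal_mult_top top_unique)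
next
  case (real x)
  then have "ennreal (w * x powr q) \<le> ennreal G" using assms by (simp add: ennreal_mult)
  then have "x powr q \<le> G / w" using assms by (simp add: ennreal_le_iff field_simps)
  then have "(x powr q) powr (1/q) \<le> (G / w) powr (1/q)" using assms by (intro powr_mono2) auto
  then show ?thesis using real assms by (simp add: powr_powr ennreal_leI)
qed

lemma enn_powr_add_le:
  assumes "0 < r"
  shows "enn_powr (a + b) r \<le> ennreal (2 powr r) * (enn_powr a r + enn_powr b r)"
proof (cases a rule: ennreal_cases)
  case (real x)
  show ?thesis
  proof (cases b rule: ennreal_cases)
    case (real y)
    then show ?thesis using \<open>a = ennreal x\<close> \<open>0 \<le> x\<close> assms powr_add_le_two_powr[of x y r]
      by (simp add: ennreal_mult[symmetric] ennreal_plus[symmetric] del: ennreal_plus)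
  qed (simp add: ennreal_mult_top)
qed (simp add: ennreal_mult_top)

lemma enn_powr_two_add_le:
  fixes X Y :: ennreal and C r :: real
  assumes "0 \<le> C" "0 < r"
  shows "enn_powr (2 * X + ennreal C * Y) r
    \<le> ennreal (2 powr r) * (ennreal (2 powr r) * enn_powr X r + ennreal (C powr r) * enn_powr Y r)"
proof -
  have "enn_powr 2 r = ennreal (2 powr r)" using enn_powr_ennreal[of 2 r] by simp
  then have "enn_powr (2 * X) r = ennreal (2 powr r) * enn_powr X r"
    using enn_powr_mult[OF assms(2), of 2 X] by simp
  moreover have "enn_powr (ennreal C * Y) r = ennreal (C powr r) * enn_powr Y r"
    using assms by (simp add: enn_powr_mult)
  ultimately show ?thesis using enn_powr_add_le[OF assms(2), of "2 * X" "ennreal C * Y"] by simp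
qed

section \<open>Series and the discrete Hardy inequality\<close>

lemma ennreal_suminf_commute:
  fixes f :: "nat \<Rightarrow> nat \<Rightarrow> ennreal"
  shows "(\<Sum>k. \<Sum>i. f k i) = (\<Sum>i. \<Sum>k. f k i)"
proof -
  have "(\<Sum>k. \<Sum>i. f k i) = (\<Sum>k. \<integral>\<^sup>+ i. f k i \<partial>count_space UNIV)"
    by (simp add: nn_integral_count_space_nat)
  also have "\<dots> = (\<integral>\<^sup>+ i. (\<Sum>k. f k i) \<partial>count_space UNIV)"
    by (rule nn_integral_suminf[symmetric]) simp
  also have "\<dots> = (\<Sum>i. \<Sum>k. f k i)" by (simp add: nn_integral_count_space_nat)
  finally show ?thesis .
qed

lemma ennreal_suminf_geometric:
  assumes "0 \<le> c" "c < (1::real)"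
  shows "(\<Sum>m. ennreal (c ^ m)) = ennreal (1 / (1 - c))"
  using assms by (simp add: suminf_ennreal2 summable_geometric suminf_geometric)

lemma ennreal_suminf_shift:
  fixes h :: "nat \<Rightarrow> ennreal"
  shows "(\<Sum>k. if m \<le> k then h (k - m) else 0) = (\<Sum>k. h k)"
  using suminf_offset[of "\<lambda>k. if m \<le> k then h (k - m) else 0" m] by simp

lemma ennreal_term_le_suminf: "f n \<le> (\<Sum>k. (f k :: ennreal))"
  using sum_le_suminf[of f "{n}"] by simp

lemma ennreal_suminf_shift_le:
  fixes f :: "nat \<Rightarrow> ennreal"
  shows "(\<Sum>k. f (k + m)) \<le> (\<Sum>k. f k)"
  using suminf_offset[of f m] by (simp add: add_increasing2)

lemma enn_powr_geometric_sum_le: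
  fixes Y :: "nat \<Rightarrow> ennreal" and d r :: real
  assumes d: "0 \<le> d" "d < 1" and r: "0 < r"
  shows "enn_powr (\<Sum>m. ennreal ((d ^ 2) ^ m) * Y m) r
    \<le> ennreal ((1 / (1 - d)) powr r) * (\<Sum>m. ennreal ((d powr r) ^ m) * enn_powr (Y m) r)"
proof -
  define M where "M = enn_powr (\<Sum>m. enn_powr (ennreal (d ^ m) * Y m) r) (1/r)"
  have le_M: "ennreal (d ^ m) * Y m \<le> M" for m
    unfolding M_def by (rule enn_powr_le_imp_le_root[OF r ennreal_term_le_suminf])
  have "(\<Sum>m. ennreal ((d ^ 2) ^ m) * Y m) = (\<Sum>m. ennreal (d ^ m) * (ennreal (d ^ m) * Y m))"
  proof (intro suminf_cong)
    fix m
    have "ennreal ((d ^ 2) ^ m) = ennreal (d ^ m) * ennreal (d ^ m)"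
      using d by (simp add: ennreal_mult[symmetric] power_mult_distrib[symmetric] power2_eq_square)
    then show "ennreal ((d ^ 2) ^ m) * Y m = ennreal (d ^ m) * (ennreal (d ^ m) * Y m)"
      by (simp add: mult.assoc)
  qed
  also have "\<dots> \<le> (\<Sum>m. ennreal (d ^ m) * M)"
    by (intro suminf_le summableI mult_left_mono le_M) auto
  also have "\<dots> = ennreal (1 / (1 - d)) * M" using ennreal_suminf_geometric[OF d] by simp
  finally have "enn_powr (\<Sum>m. ennreal ((d ^ 2) ^ m) * Y m) r \<le> enn_powr (ennreal (1 / (1 - d)) * M) r"
    using r by (intro enn_powr_mono) auto
  also have "\<dots> = ennreal ((1 / (1 - d)) powr r) * (\<Sum>m. enn_powr (ennreal (d ^ m) * Y m) r)"
    using r d by (simp add: enn_powr_mult M_def enn_powr_powr_inverse)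
  also have "(\<Sum>m. enn_powr (ennreal (d ^ m) * Y m) r) = (\<Sum>m. ennreal ((d powr r) ^ m) * enn_powr (Y m) r)"
    using r d by (simp add: enn_powr_mult powr_power_comm)
  finally show ?thesis .
qed

lemma discrete_hardy_inequality:
  fixes Y :: "nat \<Rightarrow> nat \<Rightarrow> ennreal" and d r :: real
  assumes d: "0 \<le> d" "d < 1" and r: "0 < r" and T: "\<And>m. (\<Sum>k. enn_powr (Y k m) r) \<le> T"
  shows "(\<Sum>k. enn_powr (\<Sum>m. ennreal ((d ^ 2) ^ m) * Y k m) r)
    \<le> ennreal ((1 / (1 - d)) powr r / (1 - d powr r)) * T"
proof -
  define e where "e = d powr r"
  have e: "0 \<le> e" "e < 1"
    using d r powr_less_mono2[of r d 1] by (auto simp: e_def)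
  define A where "A = (1 / (1 - d)) powr r"
  have "(\<Sum>k. enn_powr (\<Sum>m. ennreal ((d ^ 2) ^ m) * Y k m) r)
      \<le> (\<Sum>k. ennreal A * (\<Sum>m. ennreal (e ^ m) * enn_powr (Y k m) r))"
    unfolding A_def e_def by (intro suminf_le summableI enn_powr_geometric_sum_le d r)
  also have "\<dots> = ennreal A * (\<Sum>m. ennreal (e ^ m) * (\<Sum>k. enn_powr (Y k m) r))"
    by (simp add: ennreal_suminf_commute[of "\<lambda>k m. ennreal (e ^ m) * enn_powr (Y k m) r"])
  also have "\<dots> \<le> ennreal A * (\<Sum>m. ennreal (e ^ m) * T)"
    by (intro mult_left_mono suminf_le summableI T) auto
  also have "\<dots> = ennreal A * ennreal (1 / (1 - e)) * T"
    using ennreal_suminf_geometric[OF e] by (simp add: mult.assoc)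
  also have "ennreal A * ennreal (1 / (1 - e)) = ennreal (A / (1 - e))"
    using e by (simp add: ennreal_mult'[symmetric] A_def)
  finally show ?thesis by (simp add: A_def e_def)
qed

section \<open>Dyadic intervals and the sequence \<open>t\<^sub>k\<close>\<close>

lemma dyadic_interval_exists:
  assumes "0 < \<tau>" "\<tau> < 1"
  obtains k where "(1/2) ^ Suc k \<le> \<tau>" "\<tau> < (1/2::real) ^ k"
proof -
  define P where "P j \<longleftrightarrow> (1/2::real) ^ Suc j \<le> \<tau>" for j
  obtain n where "(1/2::real) ^ n < \<tau>" using real_arch_pow_inv[of \<tau> "1/2"] assms by auto
  then have "P n" using assms by (simp add: P_def)
  define i where "i = (LEAST j. P j)"
  have "P i" unfolding i_def by (rule LeastI[of P, OF \<open>P n\<close>])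
  moreover have "\<tau> < (1/2) ^ i"
  proof (cases i)
    case (Suc i')
    then have "\<not> P i'" using Least_le[of P i'] unfolding i_def[symmetric] by auto
    then show ?thesis using Suc by (simp add: P_def)
  qed (use assms in simp)
  ultimately show ?thesis using that by (simp add: P_def)
qed

lemma dyadic_interval_unique:
  assumes "(1/2) ^ Suc k \<le> \<tau>" "\<tau> < (1/2::real) ^ k" "(1/2) ^ Suc k' \<le> \<tau>" "\<tau> < (1/2::real) ^ k'"
  shows "k = k'"
proof (rule ccontr)
  have less: False if "Suc i \<le> j" "(1/2) ^ Suc i \<le> \<tau>" "\<tau> < (1/2::real) ^ j" for i j
    using that power_decreasing[of "Suc i" j "1/2::real"] by auto
  assume "k \<noteq> k'"
  then consider "Suc k \<le> k'" | "Suc k' \<le> k" by linarith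
  then show False using less assms by cases blast+
qed

lemma nn_integral_ge_dyadic_sum:
  fixes \<phi> :: "real \<Rightarrow> ennreal" and c :: "nat \<Rightarrow> ennreal"
  assumes le: "\<And>k t. (1/2) ^ Suc k \<le> t \<Longrightarrow> t < (1/2) ^ k \<Longrightarrow> c k \<le> \<phi> t"
  shows "(\<Sum>k. c k * ennreal ((1/2) ^ Suc k)) \<le> (\<integral>\<^sup>+ t\<in>{0<..<1}. \<phi> t \<partial>lborel)"
proof -
  define J where "J k = {(1/2::real) ^ Suc k ..< (1/2) ^ k}" for k
  have "(\<Sum>k. c k * ennreal ((1/2) ^ Suc k)) = (\<Sum>k. \<integral>\<^sup>+ t. c k * indicator (J k) t \<partial>lborel)"
    by (intro suminf_cong) (simp add: J_def nn_integral_cmult_indicator power_decreasing)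
  also have "\<dots> = (\<integral>\<^sup>+ t. (\<Sum>k. c k * indicator (J k) t) \<partial>lborel)"
    by (intro nn_integral_suminf[symmetric]) (auto simp: J_def)
  also have "\<dots> \<le> (\<integral>\<^sup>+ t\<in>{0<..<1}. \<phi> t \<partial>lborel)"
  proof (rule nn_integral_mono)
    fix t
    show "(\<Sum>k. c k * indicator (J k) t) \<le> \<phi> t * indicator {0<..<1} t"
    proof (cases "\<exists>k. t \<in> J k")
      case True
      then obtain k0 where k0: "t \<in> J k0" by blast
      have t01: "0 < t" "t < 1"
        using k0 power_le_one[of "1/2::real" k0] by (auto simp: J_def intro: less_le_trans)
      have "c n * indicator (J n) t = 0" if "n \<notin> {k0}" for n
        using that k0 dyadic_interval_unique[of k0 t n] by (auto simp: J_def indicator_def)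
      then have "(\<Sum>k. c k * indicator (J k) t) = c k0"
        using suminf_finite[of "{k0}" "\<lambda>k. c k * indicator (J k) t"] k0 by simp
      then show ?thesis using le[of k0 t] k0 t01 by (simp add: J_def)
    qed (simp add: indicator_def)
  qed
  finally show ?thesis .
qed

lemma nn_integral_le_dyadic_sum:
  fixes \<phi> :: "real \<Rightarrow> ennreal" and C :: "nat \<Rightarrow> ennreal"
  assumes le: "\<And>k t. (1/2) ^ Suc k \<le> t \<Longrightarrow> t \<le> (1/2) ^ k \<Longrightarrow> t < 1 \<Longrightarrow> \<phi> t \<le> C k"
  shows "(\<integral>\<^sup>+ t\<in>{0<..<1}. \<phi> t \<partial>lborel) \<le> (\<Sum>k. C k * ennreal ((1/2) ^ Suc k))"
proof -
  define J where "J k = {(1/2::real) ^ Suc k .. (1/2) ^ k}" for k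
  have "(\<integral>\<^sup>+ t\<in>{0<..<1}. \<phi> t \<partial>lborel) \<le> (\<integral>\<^sup>+ t. (\<Sum>k. C k * indicator (J k) t) \<partial>lborel)"
  proof (rule nn_integral_mono)
    fix t
    show "\<phi> t * indicator {0<..<1} t \<le> (\<Sum>k. C k * indicator (J k) t)"
    proof (cases "t \<in> {0<..<1}")
      case True
      then obtain k where k: "(1/2) ^ Suc k \<le> t" "t < (1/2::real) ^ k"
        using dyadic_interval_exists by auto
      then have "\<phi> t * indicator {0<..<1} t \<le> C k * indicator (J k) t"
        using le[of k t] True by (simp add: J_def)
      also have "\<dots> \<le> (\<Sum>k. C k * indicator (J k) t)" by (rule ennreal_term_le_suminf)
      finally show ?thesis .
    qed simp
  qed
  also have "\<dots> = (\<Sum>k. \<integral>\<^sup>+ t. C k * indicator (J k) t \<partial>lborel)"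
    by (intro nn_integral_suminf) (auto simp: J_def)
  also have "\<dots> = (\<Sum>k. C k * ennreal ((1/2) ^ Suc k))"
    by (intro suminf_cong) (simp add: J_def nn_integral_cmult_indicator power_decreasing)
  finally show ?thesis .
qed

lemma nn_integral_inverse:
  assumes "0 < a" "a \<le> b"
  shows "(\<integral>\<^sup>+ \<tau>\<in>{a..b}. ennreal (1 / \<tau>) \<partial>lborel) = ennreal (ln b - ln a)"
proof (rule nn_integral_has_integral_lebesgue')
  show "((\<lambda>x. 1 / x) has_integral ln b - ln a) {a..b}"
  proof (rule fundamental_theorem_of_calculus[OF assms(2)])
    fix x assume "x \<in> {a..b}"
    then have "(ln has_real_derivative (1 / x)) (at x within {a..b})"
      using assms by (auto intro!: derivative_eq_intros)
    then show "(ln has_vector_derivative 1 / x) (at x within {a..b})"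
      by (simp add: has_real_derivative_iff_has_vector_derivative)
  qed
qed (use assms in auto)

lemma nn_integral_powr:
  assumes "0 \<le> c" "-1 < e" "0 \<le> l"
  shows "(\<integral>\<^sup>+ \<tau>\<in>{0..c}. ennreal (l * \<tau> powr e) \<partial>lborel) = ennreal (l * (c powr (e+1) / (e+1)))"
proof (rule nn_integral_has_integral_lebesgue')
  show "((\<lambda>x. l * x powr e) has_integral l * (c powr (e + 1) / (e + 1))) {0..c}"
    by (intro has_integral_mult_right has_integral_powr_from_0) (use assms in auto)
qed (use assms in auto)

lemma borel_measurable_antimono_on_indicator:
  fixes G :: "real \<Rightarrow> real"
  assumes anti: "\<And>s1 s2. 0 < s1 \<Longrightarrow> s1 \<le> s2 \<Longrightarrow> G s2 \<le> G s1" and a: "0 < a"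
  shows "(\<lambda>s. ennreal (G s powr p) * indicator {a..b} s) \<in> borel_measurable borel"
proof -
  have "(\<lambda>s. - G (max a s)) \<in> borel_measurable borel"
  proof (rule borel_measurable_mono, rule monoI)
    fix x y :: real assume "x \<le> y"
    then show "- G (max a x) \<le> - G (max a y)" using anti[of "max a x" "max a y"] a by simp
  qed
  then have [measurable]: "(\<lambda>s. G (max a s)) \<in> borel_measurable borel"
    using borel_measurable_uminus by fastforce
  have "(\<lambda>s. ennreal (G s powr p) * indicator {a..b} s) =
        (\<lambda>s. ennreal (G (max a s) powr p) * indicator {a..b} s)"
    by (rule ext) (auto simp: indicator_def max_def)
  then show ?thesis by simp
qed

definition tseq :: "nat \<Rightarrow> real" where
  "tseq k = 2 powr (1 - 2 ^ k)"

lemma tseq_pos: "0 < tseq k"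
  by (simp add: tseq_def)

lemma tseq_0 [simp]: "tseq 0 = 1"
  by (simp add: tseq_def)

lemma ln_tseq: "ln (tseq k) = (1 - 2 ^ k) * ln 2"
  by (simp add: tseq_def ln_powr)

lemma tseq_le_1: "tseq k \<le> 1"
  using powr_mono[of "1 - 2 ^ k" 0 "2::real"] by (simp add: tseq_def)

lemma tseq_Suc_le_half: "tseq (Suc k) \<le> tseq k / 2"
proof -
  have "tseq (Suc k) \<le> 2 powr ((1 - 2 ^ k) - 1)"
    unfolding tseq_def by (intro powr_mono) auto
  also have "\<dots> = tseq k / 2"
    unfolding tseq_def powr_diff by simp
  finally show ?thesis .
qed

lemma tseq_antimono: "j \<le> k \<Longrightarrow> tseq k \<le> tseq j"
proof (induction k)
  case (Suc k)
  then show ?case using tseq_Suc_le_half[of k] tseq_pos[of k] by (cases "j = Suc k") auto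
qed simp

lemma tseq_le_half_power: "tseq k \<le> (1/2) ^ k"
proof (induction k)
  case (Suc k) then show ?case using tseq_Suc_le_half[of k] by simp
qed simp

lemma tseq_interval_exists:
  assumes "0 < \<tau>" "\<tau> \<le> tseq k"
  obtains i where "k \<le> i" "tseq (Suc i) \<le> \<tau>" "\<tau> \<le> tseq i" "\<And>j. k \<le> j \<Longrightarrow> tseq (Suc j) \<le> \<tau> \<Longrightarrow> i \<le> j"
proof -
  define P where "P j \<longleftrightarrow> k \<le> j \<and> tseq (Suc j) \<le> \<tau>" for j
  obtain n where n: "(1/2::real) ^ n < \<tau>" using real_arch_pow_inv[of \<tau> "1/2"] assms by auto
  have "(1/2::real) ^ Suc (max k n) \<le> (1/2) ^ n"
    by (intro power_decreasing) auto
  then have "tseq (Suc (max k n)) \<le> (1/2) ^ n"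
    using tseq_le_half_power[of "Suc (max k n)"] by linarith
  then have "P (max k n)" using n by (simp add: P_def)
  define i where "i = (LEAST j. P j)"
  have Pi: "P i" unfolding i_def by (rule LeastI[of P, OF \<open>P (max k n)\<close>])
  have min: "\<And>j. P j \<Longrightarrow> i \<le> j" unfolding i_def by (rule Least_le)
  have "\<tau> \<le> tseq i"
  proof (cases "i = k")
    case False
    then obtain i' where i': "i = Suc i'" "k \<le> i'" using Pi by (cases i) (auto simp: P_def)
    then have "\<not> P i'" using min[of i'] by auto
    then show ?thesis using i' by (auto simp: P_def)
  qed (use assms in simp)
  then show ?thesis using that Pi min by (auto simp: P_def)
qed

lemma log_weight_le:
  fixes p :: real
  assumes p: "1 \<le> p" and \<tau>: "0 < \<tau>" "\<tau> \<le> tseq j"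
  shows "(1 - ln \<tau>) powr (-1/p) \<le> 2 * (2 ^ j) powr (-1/p)"
proof -
  have l2: "1/2 \<le> ln (2::real)" "ln (2::real) \<le> 1"
    using ln2_ge_two_thirds ln_2_less_1 by auto
  have "ln \<tau> \<le> ln (tseq j)" using \<tau> tseq_pos[of j] by simp
  then have "ln \<tau> \<le> ln 2 - 2 ^ j * ln 2" by (simp add: ln_tseq algebra_simps)
  moreover have "2 ^ j * (1/2) \<le> 2 ^ j * ln (2::real)" using l2 by (intro mult_left_mono) auto
  ultimately have le: "2 ^ j * (1/2::real) \<le> 1 - ln \<tau>" using l2 by linarith
  have "(1 - ln \<tau>) powr (-1/p) \<le> (2 ^ j * (1/2::real)) powr (-1/p)"
    using le p by (intro powr_mono2') auto
  also have "\<dots> = (2 ^ j) powr (-1/p) * 2 powr (1/p)"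
    by (simp add: powr_mult powr_divide powr_minus_divide)
  also have "\<dots> \<le> (2 ^ j) powr (-1/p) * 2"
    using powr_mono[of "1/p" 1 "2::real"] p by (intro mult_left_mono) auto
  finally show ?thesis by (simp add: mult.commute)
qed

section \<open>The decreasing rearrangement\<close>

lemma level_set_sets_lebesgue:
  fixes f :: "'a::euclidean_space \<Rightarrow> real"
  assumes "\<Omega> \<in> sets lebesgue" and [measurable]: "f \<in> borel_measurable (lebesgue_on \<Omega>)"
  shows "{x\<in>\<Omega>. y < \<bar>f x\<bar>} \<in> sets lebesgue"
proof -
  have "{x\<in>space (lebesgue_on \<Omega>). y < \<bar>f x\<bar>} \<in> sets (lebesgue_on \<Omega>)"
    by measurable
  then show ?thesis using assms(1) by (simp add: sets_restrict_space_iff)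
qed

lemma sum_space_measurable:
  fixes f :: "'a::euclidean_space \<Rightarrow> real"
  assumes "f \<in> sum_space \<Omega> p"
  shows "f \<in> borel_measurable (lebesgue_on \<Omega>)"
proof -
  obtain g0 g1 where g: "g0 \<in> grand_space \<Omega> p" "g1 \<in> small_space \<Omega> p" "\<forall>x\<in>\<Omega>. f x = g0 x + g1 x"
    using assms by (auto simp: sum_space_def)
  have [measurable]: "g0 \<in> borel_measurable (lebesgue_on \<Omega>)" "g1 \<in> borel_measurable (lebesgue_on \<Omega>)"
    using g by (auto simp: grand_space_def small_space_def)
  have "(\<lambda>x. g0 x + g1 x) \<in> borel_measurable (lebesgue_on \<Omega>)" by measurable
  then show ?thesis using g(3) by (subst measurable_cong[where g="\<lambda>x. g0 x + g1 x"]) auto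
qed

locale unit_domain =
  fixes \<Omega> :: "'a::euclidean_space set"
  assumes sets_domain: "\<Omega> \<in> sets lebesgue" and emeasure_domain: "emeasure lebesgue \<Omega> = 1"
begin

definition distrib_fun :: "('a \<Rightarrow> real) \<Rightarrow> real \<Rightarrow> real" where
  "distrib_fun f y = measure lebesgue {x\<in>\<Omega>. y < \<bar>f x\<bar>}"

lemma dec_rearr_eq_Inf: "dec_rearr \<Omega> f s = Inf {y. 0 \<le> y \<and> distrib_fun f y \<le> s}"
  by (simp add: dec_rearr_def distrib_fun_def)

lemma fmeasurable_subset_domain:
  assumes "A \<in> sets lebesgue" "A \<subseteq> \<Omega>"
  shows "A \<in> fmeasurable lebesgue"
proof -
  have "emeasure lebesgue A \<le> 1" using emeasure_mono[OF assms(2) sets_domain] emeasure_domain by simp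
  also have "(1::ennreal) < \<infinity>" by simp
  finally show ?thesis using assms by (simp add: fmeasurable_def)
qed

lemma level_set_fmeasurable:
  fixes f :: "'a \<Rightarrow> real"
  assumes "f \<in> borel_measurable (lebesgue_on \<Omega>)"
  shows "{x\<in>\<Omega>. y < \<bar>f x\<bar>} \<in> fmeasurable lebesgue"
  using level_set_sets_lebesgue[OF sets_domain assms] by (rule fmeasurable_subset_domain) auto

lemma distrib_fun_le_of_subset:
  fixes f g :: "'a \<Rightarrow> real"
  assumes "f \<in> borel_measurable (lebesgue_on \<Omega>)" "g \<in> borel_measurable (lebesgue_on \<Omega>)"
    and "{x\<in>\<Omega>. z < \<bar>g x\<bar>} \<subseteq> {x\<in>\<Omega>. y < \<bar>f x\<bar>}"
  shows "distrib_fun g z \<le> distrib_fun f y"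
  unfolding distrib_fun_def
  by (rule measure_mono_fmeasurable[OF assms(3)])
    (auto intro: fmeasurableD level_set_fmeasurable assms)

lemma distrib_fun_antimono:
  fixes f :: "'a \<Rightarrow> real"
  assumes "f \<in> borel_measurable (lebesgue_on \<Omega>)" "y1 \<le> y2"
  shows "distrib_fun f y2 \<le> distrib_fun f y1"
  by (rule distrib_fun_le_of_subset[OF assms(1) assms(1)]) (use assms(2) in auto)

lemma distrib_fun_tendsto_0:
  fixes f :: "'a \<Rightarrow> real"
  assumes "f \<in> borel_measurable (lebesgue_on \<Omega>)"
  shows "(\<lambda>n. distrib_fun f (real n)) \<longlonglongrightarrow> 0"
proof -
  define A where "A n = {x\<in>\<Omega>. real n < \<bar>f x\<bar>}" for n :: nat
  have fin: "A n \<in> fmeasurable lebesgue" for n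
    unfolding A_def by (rule level_set_fmeasurable[OF assms])
  then have "range A \<subseteq> sets lebesgue" by auto
  moreover have "emeasure lebesgue (A n) \<noteq> \<infinity>" for n
    unfolding infinity_ennreal_def by (rule fmeasurableD2[OF fin])
  moreover have "decseq A" unfolding A_def decseq_def by auto
  moreover have "(\<Inter>n. A n) = {}"
  proof safe
    fix x assume "x \<in> (\<Inter>n. A n)"
    moreover obtain n :: nat where "\<bar>f x\<bar> < real n" using reals_Archimedean2 by blast
    ultimately show "x \<in> {}" by (auto simp: A_def dest!: spec[of _ n])
  qed
  ultimately show ?thesis
    using Lim_measure_decseq[of A lebesgue] by (simp add: A_def distrib_fun_def)
qed

lemma distrib_fun_right_continuous:
  fixes f :: "'a \<Rightarrow> real"
  assumes "f \<in> borel_measurable (lebesgue_on \<Omega>)"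
  shows "(\<lambda>n. distrib_fun f (y + 1 / Suc n)) \<longlonglongrightarrow> distrib_fun f y"
proof -
  define A where "A n = {x\<in>\<Omega>. y + 1 / Suc n < \<bar>f x\<bar>}" for n :: nat
  have "A n \<in> fmeasurable lebesgue" for n
    unfolding A_def by (rule level_set_fmeasurable[OF assms])
  then have "range A \<subseteq> sets lebesgue" by (auto simp: fmeasurable_def)
  moreover have "incseq A" unfolding A_def incseq_def
  proof clarsimp
    fix m n x assume "m \<le> n" "y + 1 / (1 + real m) < \<bar>f x\<bar>"
    moreover have "1 / (1 + real n) \<le> 1 / (1 + real m)" using \<open>m \<le> n\<close>
      by (intro divide_left_mono) auto
    ultimately show "y + 1 / (1 + real n) < \<bar>f x\<bar>" by linarith
  qed
  moreover have "(\<Union>n. A n) = {x\<in>\<Omega>. y < \<bar>f x\<bar>}"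
  proof safe
    fix x n assume "x \<in> A n"
    then have "x \<in> \<Omega>" "y + 1 / Suc n < \<bar>f x\<bar>" by (auto simp: A_def)
    moreover have "0 < 1 / Suc n" by simp
    ultimately show "x \<in> \<Omega>" "y < \<bar>f x\<bar>" by linarith+
  next
    fix x assume x: "x \<in> \<Omega>" "y < \<bar>f x\<bar>"
    then obtain n :: nat where "1 / Suc n < \<bar>f x\<bar> - y"
      using reals_Archimedean[of "\<bar>f x\<bar> - y"] by (auto simp: inverse_eq_divide)
    then have "y + 1 / Suc n < \<bar>f x\<bar>" by linarith
    then show "x \<in> (\<Union>n. A n)" using x unfolding A_def by blast
  qed
  moreover have "emeasure lebesgue (\<Union>n. A n) \<noteq> \<infinity>"
    unfolding calculation(3) infinity_ennreal_def by (rule fmeasurableD2[OF level_set_fmeasurable[OF assms]])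
  ultimately show ?thesis
    using Lim_measure_incseq[of A lebesgue] by (simp add: A_def distrib_fun_def)
qed

lemma ex_distrib_fun_le:
  fixes f :: "'a \<Rightarrow> real"
  assumes "f \<in> borel_measurable (lebesgue_on \<Omega>)" "0 < s"
  shows "\<exists>y\<ge>0. distrib_fun f y \<le> s"
proof -
  obtain n where "distrib_fun f (real n) < s"
    using order_tendstoD(2)[OF distrib_fun_tendsto_0[OF assms(1)] assms(2)]
    by (auto simp: eventually_sequentially)
  then show ?thesis by (intro exI[of _ "real n"]) auto
qed

text \<open>Only \<open>0 < s\<close> is meaningful: for \<open>s < 0\<close> the infimum in \<^const>\<open>dec_rearr\<close> is
  taken over the empty set.\<close>

lemma dec_rearr_nonneg:
  fixes f :: "'a \<Rightarrow> real"
  assumes "f \<in> borel_measurable (lebesgue_on \<Omega>)" "0 < s"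
  shows "0 \<le> dec_rearr \<Omega> f s"
  unfolding dec_rearr_eq_Inf using ex_distrib_fun_le[OF assms] by (intro cInf_greatest) auto

lemma dec_rearr_le:
  fixes f :: "'a \<Rightarrow> real"
  assumes "0 \<le> y" "distrib_fun f y \<le> s"
  shows "dec_rearr \<Omega> f s \<le> y"
  unfolding dec_rearr_eq_Inf by (rule cInf_lower) (use assms in \<open>auto simp: bdd_below_def\<close>)

lemma distrib_fun_dec_rearr_le:
  fixes f :: "'a \<Rightarrow> real"
  assumes f: "f \<in> borel_measurable (lebesgue_on \<Omega>)" and s: "0 < s"
  shows "distrib_fun f (dec_rearr \<Omega> f s) \<le> s"
proof -
  define Y where "Y = {y. 0 \<le> y \<and> distrib_fun f y \<le> s}"
  define F where "F = dec_rearr \<Omega> f s"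
  have "distrib_fun f (F + 1 / Suc n) \<le> s" for n
  proof -
    have "Inf Y < F + 1 / Suc n" unfolding F_def dec_rearr_eq_Inf Y_def by simp
    moreover have "Y \<noteq> {}" using ex_distrib_fun_le[OF f s] by (auto simp: Y_def)
    ultimately obtain y where y: "y \<in> Y" "y < F + 1 / Suc n"
      using cInf_lessD by blast
    then show ?thesis using distrib_fun_antimono[OF f, of y "F + 1 / Suc n"] by (simp add: Y_def)
  qed
  then show ?thesis
    using LIMSEQ_le_const2[OF distrib_fun_right_continuous[OF f]] by (simp add: F_def)
qed

lemma dec_rearr_antimono:
  fixes f :: "'a \<Rightarrow> real"
  assumes "f \<in> borel_measurable (lebesgue_on \<Omega>)" "0 < s1" "s1 \<le> s2"
  shows "dec_rearr \<Omega> f s2 \<le> dec_rearr \<Omega> f s1"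
  using distrib_fun_dec_rearr_le[of f s1] dec_rearr_nonneg[of f s1] assms
  by (intro dec_rearr_le) auto

lemma dec_rearr_dominated:
  fixes f g :: "'a \<Rightarrow> real"
  assumes f: "f \<in> borel_measurable (lebesgue_on \<Omega>)" and g: "g \<in> borel_measurable (lebesgue_on \<Omega>)"
    and le: "\<And>x. x \<in> \<Omega> \<Longrightarrow> \<bar>g x\<bar> \<le> \<bar>f x\<bar>" and s: "0 < s"
  shows "dec_rearr \<Omega> g s \<le> dec_rearr \<Omega> f s"
proof (rule dec_rearr_le)
  have "distrib_fun g (dec_rearr \<Omega> f s) \<le> distrib_fun f (dec_rearr \<Omega> f s)"
    by (rule distrib_fun_le_of_subset[OF f g]) (use le in fastforce)
  then show "distrib_fun g (dec_rearr \<Omega> f s) \<le> s"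
    using distrib_fun_dec_rearr_le[OF f s] by simp
qed (rule dec_rearr_nonneg[OF f s])

lemma dec_rearr_le_bound:
  fixes g :: "'a \<Rightarrow> real"
  assumes "\<And>x. x \<in> \<Omega> \<Longrightarrow> \<bar>g x\<bar> \<le> l" "0 \<le> l" "0 \<le> s"
  shows "dec_rearr \<Omega> g s \<le> l"
proof (rule dec_rearr_le)
  have empty: "{x\<in>\<Omega>. l < \<bar>g x\<bar>} = {}" using assms(1) by force
  show "distrib_fun g l \<le> s" unfolding distrib_fun_def empty using assms(3) by simp
qed (rule assms(2))

lemma dec_rearr_le_0:
  fixes f g :: "'a \<Rightarrow> real"
  assumes f: "f \<in> borel_measurable (lebesgue_on \<Omega>)" and g: "g \<in> borel_measurable (lebesgue_on \<Omega>)"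
    and supp: "\<And>x. x \<in> \<Omega> \<Longrightarrow> g x \<noteq> 0 \<Longrightarrow> l < \<bar>f x\<bar>" and "distrib_fun f l \<le> s"
  shows "dec_rearr \<Omega> g s \<le> 0"
proof (rule dec_rearr_le)
  have "distrib_fun g 0 \<le> distrib_fun f l"
    by (rule distrib_fun_le_of_subset[OF f g]) (use supp in force)
  then show "distrib_fun g 0 \<le> s" using assms(4) by simp
qed simp

lemma dec_rearr_add_le:
  fixes f g0 g1 :: "'a \<Rightarrow> real"
  assumes f: "f \<in> borel_measurable (lebesgue_on \<Omega>)"
    and g0: "g0 \<in> borel_measurable (lebesgue_on \<Omega>)" and g1: "g1 \<in> borel_measurable (lebesgue_on \<Omega>)"
    and eq: "\<And>x. x \<in> \<Omega> \<Longrightarrow> f x = g0 x + g1 x" and s: "0 < s"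
  shows "dec_rearr \<Omega> f s \<le> dec_rearr \<Omega> g0 (s/2) + dec_rearr \<Omega> g1 (s/2)"
proof (rule dec_rearr_le)
  define a where "a = dec_rearr \<Omega> g0 (s/2)"
  define b where "b = dec_rearr \<Omega> g1 (s/2)"
  have s2: "0 < s/2" using s by simp
  show "0 \<le> a + b" using dec_rearr_nonneg[OF g0 s2] dec_rearr_nonneg[OF g1 s2] by (simp add: a_def b_def)
  have "{x\<in>\<Omega>. a + b < \<bar>f x\<bar>} \<subseteq> {x\<in>\<Omega>. a < \<bar>g0 x\<bar>} \<union> {x\<in>\<Omega>. b < \<bar>g1 x\<bar>}"
    using eq by force
  then have "distrib_fun f (a + b) \<le> measure lebesgue ({x\<in>\<Omega>. a < \<bar>g0 x\<bar>} \<union> {x\<in>\<Omega>. b < \<bar>g1 x\<bar>})"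
    unfolding distrib_fun_def
    by (rule measure_mono_fmeasurable) (auto intro: fmeasurableD level_set_fmeasurable f g0 g1)
  also have "\<dots> \<le> distrib_fun g0 a + distrib_fun g1 b"
    unfolding distrib_fun_def by (intro measure_Un_le fmeasurableD level_set_fmeasurable g0 g1)
  also have "\<dots> \<le> s/2 + s/2"
    using distrib_fun_dec_rearr_le[OF g0 s2] distrib_fun_dec_rearr_le[OF g1 s2] by (simp add: a_def b_def)
  finally show "distrib_fun f (a + b) \<le> s" by simp
qed

end

section \<open>Dyadic blocks and the K-functional\<close>

locale grand_small_couple = unit_domain +
  fixes p :: real
  assumes p_gt_1: "1 < p"
begin

lemma p_pos: "0 < p" and p_ge_1: "1 \<le> p"
  using p_gt_1 by auto

definition block_integral :: "('a \<Rightarrow> real) \<Rightarrow> nat \<Rightarrow> ennreal" where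
  "block_integral f k = (\<integral>\<^sup>+ s\<in>{tseq (Suc k)..tseq k}. ennreal (dec_rearr \<Omega> f s powr p) \<partial>lborel)"

definition block_norm :: "('a \<Rightarrow> real) \<Rightarrow> nat \<Rightarrow> real" where
  "block_norm f k = enn2real (block_integral f k) powr (1/p)"

lemma block_norm_nonneg: "0 \<le> block_norm f k"
  by (simp add: block_norm_def)

lemma borel_measurable_dec_rearr_powr_indicator:
  fixes g :: "'a \<Rightarrow> real"
  assumes "g \<in> borel_measurable (lebesgue_on \<Omega>)" "0 < a"
  shows "(\<lambda>s. ennreal (dec_rearr \<Omega> g s powr p) * indicator {a..b} s) \<in> borel_measurable borel"
  by (rule borel_measurable_antimono_on_indicator[OF dec_rearr_antimono[OF assms(1)] assms(2)])

lemma nn_integral_dec_rearr_le_const: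
  fixes f :: "'a \<Rightarrow> real"
  assumes f: "f \<in> borel_measurable (lebesgue_on \<Omega>)" and "0 < a" "a \<le> b"
  shows "(\<integral>\<^sup>+ s\<in>{a..b}. ennreal (dec_rearr \<Omega> f s powr p) \<partial>lborel)
    \<le> ennreal (dec_rearr \<Omega> f a powr p * (b - a))"
proof -
  have "(\<integral>\<^sup>+ s\<in>{a..b}. ennreal (dec_rearr \<Omega> f s powr p) \<partial>lborel)
      \<le> (\<integral>\<^sup>+ s. ennreal (dec_rearr \<Omega> f a powr p) * indicator {a..b} s \<partial>lborel)"
  proof (intro nn_integral_mono)
    fix s
    show "ennreal (dec_rearr \<Omega> f s powr p) * indicator {a..b} s
        \<le> ennreal (dec_rearr \<Omega> f a powr p) * indicator {a..b} s"
      using assms dec_rearr_antimono[OF f, of a s] dec_rearr_nonneg[OF f, of s] p_pos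
      by (cases "s \<in> {a..b}") (auto intro!: ennreal_leI powr_mono2)
  qed
  also have "\<dots> = ennreal (dec_rearr \<Omega> f a powr p * (b - a))"
    using assms by (simp add: nn_integral_cmult_indicator ennreal_mult)
  finally show ?thesis .
qed

lemma block_integral_less_top:
  fixes f :: "'a \<Rightarrow> real"
  assumes "f \<in> borel_measurable (lebesgue_on \<Omega>)"
  shows "block_integral f k < \<infinity>"
  using nn_integral_dec_rearr_le_const[OF assms tseq_pos[of "Suc k"] tseq_antimono[of k "Suc k"]]
  unfolding block_integral_def by (auto intro: le_less_trans)

lemma block_integral_real:
  fixes f :: "'a \<Rightarrow> real"
  assumes "f \<in> borel_measurable (lebesgue_on \<Omega>)"
  shows "block_integral f k = ennreal (block_norm f k powr p)"
proof -
  have "block_integral f k = ennreal (enn2real (block_integral f k))"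
    using block_integral_less_top[OF assms, of k] by (simp add: less_top)
  then show ?thesis using p_pos by (simp add: block_norm_def powr_powr)
qed

lemma nn_integral_dec_rearr_add_le:
  fixes f g0 g1 :: "'a \<Rightarrow> real"
  assumes f: "f \<in> borel_measurable (lebesgue_on \<Omega>)"
    and g0: "g0 \<in> borel_measurable (lebesgue_on \<Omega>)" and g1: "g1 \<in> borel_measurable (lebesgue_on \<Omega>)"
    and eq: "\<And>x. x \<in> \<Omega> \<Longrightarrow> f x = g0 x + g1 x" and a: "0 < a"
  shows "(\<integral>\<^sup>+ s\<in>{a..b}. ennreal (dec_rearr \<Omega> f s powr p) \<partial>lborel)
    \<le> ennreal (2 powr (p + 1)) * ((\<integral>\<^sup>+ s\<in>{a/2..b/2}. ennreal (dec_rearr \<Omega> g0 s powr p) \<partial>lborel)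
                               + (\<integral>\<^sup>+ s\<in>{a/2..b/2}. ennreal (dec_rearr \<Omega> g1 s powr p) \<partial>lborel))"
proof -
  define h0 where "h0 s = ennreal (dec_rearr \<Omega> g0 s powr p) * indicator {a/2..b/2} s" for s
  define h1 where "h1 s = ennreal (dec_rearr \<Omega> g1 s powr p) * indicator {a/2..b/2} s" for s
  have h0m: "h0 \<in> borel_measurable borel" and h1m: "h1 \<in> borel_measurable borel"
    unfolding h0_def h1_def using a by (auto intro: borel_measurable_dec_rearr_powr_indicator g0 g1)
  have half: "(\<integral>\<^sup>+ s. h (s/2) \<partial>lborel) = 2 * (\<integral>\<^sup>+ s. h s \<partial>lborel)"
    if "h \<in> borel_measurable borel" for h :: "real \<Rightarrow> ennreal"
    using nn_integral_real_affine[of "\<lambda>s. h (s/2)" 2 0] that by simp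
  have "(\<integral>\<^sup>+ s\<in>{a..b}. ennreal (dec_rearr \<Omega> f s powr p) \<partial>lborel)
      \<le> (\<integral>\<^sup>+ s. ennreal (2 powr p) * (h0 (s/2) + h1 (s/2)) \<partial>lborel)"
  proof (rule nn_integral_mono)
    fix s
    show "ennreal (dec_rearr \<Omega> f s powr p) * indicator {a..b} s \<le> ennreal (2 powr p) * (h0 (s/2) + h1 (s/2))"
    proof (cases "s \<in> {a..b}")
      case True
      then have s: "0 < s" "0 < s/2" using a by auto
      define x0 where "x0 = dec_rearr \<Omega> g0 (s/2)"
      define x1 where "x1 = dec_rearr \<Omega> g1 (s/2)"
      have x: "0 \<le> x0" "0 \<le> x1"
        using dec_rearr_nonneg[OF g0 s(2)] dec_rearr_nonneg[OF g1 s(2)] by (auto simp: x0_def x1_def)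
      have "dec_rearr \<Omega> f s \<le> x0 + x1"
        unfolding x0_def x1_def by (rule dec_rearr_add_le[OF f g0 g1 eq s(1)])
      then have "dec_rearr \<Omega> f s powr p \<le> (x0 + x1) powr p"
        using dec_rearr_nonneg[OF f s(1)] p_pos by (intro powr_mono2) auto
      also have "\<dots> \<le> 2 powr p * (x0 powr p + x1 powr p)"
        using x p_pos by (intro powr_add_le_two_powr) auto
      finally have "ennreal (dec_rearr \<Omega> f s powr p)
          \<le> ennreal (2 powr p) * (ennreal (x0 powr p) + ennreal (x1 powr p))"
        by (simp add: ennreal_mult[symmetric] ennreal_plus[symmetric] ennreal_leI del: ennreal_plus)
      then show ?thesis using True by (simp add: h0_def h1_def x0_def x1_def indicator_def)
    qed simp
  qed
  also have "\<dots> = ennreal (2 powr p) * (2 * (\<integral>\<^sup>+ s. h0 s \<partial>lborel) + 2 * (\<integral>\<^sup>+ s. h1 s \<partial>lborel))"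
    using h0m h1m by (simp add: nn_integral_cmult nn_integral_add half)
  also have "\<dots> = ennreal (2 powr (p + 1)) * ((\<integral>\<^sup>+ s. h0 s \<partial>lborel) + (\<integral>\<^sup>+ s. h1 s \<partial>lborel))"
    by (simp add: powr_add ennreal_mult distrib_left mult_ac)
  finally show ?thesis by (simp add: h0_def h1_def)
qed

lemma grand_norm_ge:
  assumes "0 < \<tau>" "\<tau> < 1"
  shows "ennreal ((1 - ln \<tau>) powr (-1/p)) *
      enn_powr (\<integral>\<^sup>+ s\<in>{\<tau>..1}. ennreal (dec_rearr \<Omega> g s powr p) \<partial>lborel) (1/p) \<le> grand_norm \<Omega> p g"
  unfolding grand_norm_def
  by (rule SUP_upper[where f="\<lambda>t. ennreal ((1 - ln t) powr (-1/p)) *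
      enn_powr (\<integral>\<^sup>+ s\<in>{t..1}. ennreal (dec_rearr \<Omega> g s powr p) \<partial>lborel) (1/p)"]) (use assms in auto)

lemma nn_integral_dec_rearr_le_grand_norm:
  assumes G: "grand_norm \<Omega> p g = ennreal G" "0 \<le> G" and \<tau>: "0 < \<tau>" "\<tau> < 1"
  shows "(\<integral>\<^sup>+ s\<in>{\<tau>..1}. ennreal (dec_rearr \<Omega> g s powr p) \<partial>lborel) \<le> ennreal (G powr p * (1 - ln \<tau>))"
proof -
  have "ln \<tau> < 0" using \<tau> by (intro ln_less_zero) auto
  then have pos: "0 < 1 - ln \<tau>" by linarith
  have "(\<integral>\<^sup>+ s\<in>{\<tau>..1}. ennreal (dec_rearr \<Omega> g s powr p) \<partial>lborel)
      \<le> ennreal ((G / (1 - ln \<tau>) powr (-1/p)) powr (1 / (1/p)))"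
    using grand_norm_ge[OF \<tau>, of g] pos p_pos G by (intro mult_enn_powr_le_imp_le) auto
  also have "(G / (1 - ln \<tau>) powr (-1/p)) powr (1 / (1/p)) = G powr p * (1 - ln \<tau>)"
    using pos p_pos G(2) by (simp add: powr_minus divide_inverse powr_mult powr_powr)
  finally show ?thesis .
qed

lemma nn_integral_dec_rearr_le_small_norm:
  assumes M: "small_norm \<Omega> p g = ennreal M" "0 \<le> M" and \<sigma>: "0 < \<sigma>" "\<sigma> < c" "c < 1"
  shows "(\<integral>\<^sup>+ s\<in>{0<..\<sigma>}. ennreal (dec_rearr \<Omega> g s powr p) \<partial>lborel)
    \<le> ennreal (M powr p * (1 - ln \<sigma>) / (ln c - ln \<sigma>) powr p)"
proof -
  define H where "H t = (\<integral>\<^sup>+ s\<in>{0<..t}. ennreal (dec_rearr \<Omega> g s powr p) \<partial>lborel)" for t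
  define w where "w = (1 - ln \<sigma>) powr (-1/p)"
  define L where "L = ln c - ln \<sigma>"
  have "ln \<sigma> < 0" using \<sigma> by (intro ln_less_zero) auto
  then have pos: "0 < 1 - ln \<sigma>" by linarith
  have L: "0 < L" using \<sigma> by (simp add: L_def)
  have "ennreal (w * L) * enn_powr (H \<sigma>) (1/p)
      = (\<integral>\<^sup>+ t. ennreal w * enn_powr (H \<sigma>) (1/p) * (ennreal (1/t) * indicator {\<sigma>..c} t) \<partial>lborel)"
    using \<sigma> L pos by (subst nn_integral_cmult) (auto simp: nn_integral_inverse L_def w_def ennreal_mult mult_ac)
  also have "\<dots> \<le> small_norm \<Omega> p g"
    unfolding small_norm_def H_def[symmetric]
  proof (rule nn_integral_mono)
    fix t
    show "ennreal w * enn_powr (H \<sigma>) (1/p) * (ennreal (1/t) * indicator {\<sigma>..c} t)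
      \<le> ennreal ((1 - ln t) powr (-1/p)) * enn_powr (H t) (1/p) * ennreal (1/t) * indicator {0<..<1} t"
    proof (cases "t \<in> {\<sigma>..c}")
      case True
      then have t: "0 < t" "t < 1" "\<sigma> \<le> t" using \<sigma> by auto
      have "ln \<sigma> \<le> ln t" using t \<sigma> by simp
      moreover have "ln t < 0" using t by (intro ln_less_zero) auto
      ultimately have "w \<le> (1 - ln t) powr (-1/p)"
        unfolding w_def using p_pos by (intro powr_mono2') auto
      moreover have "H \<sigma> \<le> H t" unfolding H_def using t
        by (intro nn_integral_mono) (auto simp: indicator_def)
      then have "enn_powr (H \<sigma>) (1/p) \<le> enn_powr (H t) (1/p)" using p_pos by (intro enn_powr_mono) auto
      ultimately show ?thesis using True t by (auto intro!: mult_mono ennreal_leI)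
    qed simp
  qed
  finally have "H \<sigma> \<le> ennreal ((M / (w * L)) powr (1 / (1/p)))"
    using pos L p_pos M by (intro mult_enn_powr_le_imp_le) (auto simp: w_def)
  also have "(M / (w * L)) powr (1 / (1/p)) = M powr p * (1 - ln \<sigma>) / L powr p"
    using pos L p_pos M(2) by (simp add: w_def powr_minus divide_inverse powr_mult powr_powr inverse_powr)
  finally show ?thesis by (simp add: H_def L_def)
qed

text \<open>The cut-off \<open>7/8\<close> is arbitrary in \<open>(1/2, 1)\<close>: it only has to exceed \<open>tseq k / 2\<close> for every \<open>k\<close>.\<close>

lemma block_integral_le_norms:
  fixes f g0 g1 :: "'a \<Rightarrow> real" and k :: nat
  assumes f: "f \<in> borel_measurable (lebesgue_on \<Omega>)"
    and g0: "g0 \<in> borel_measurable (lebesgue_on \<Omega>)" "grand_norm \<Omega> p g0 = ennreal G" "0 \<le> G"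
    and g1: "g1 \<in> borel_measurable (lebesgue_on \<Omega>)" "small_norm \<Omega> p g1 = ennreal M" "0 \<le> M"
    and eq: "\<And>x. x \<in> \<Omega> \<Longrightarrow> f x = g0 x + g1 x"
  defines "u \<equiv> (2::real) ^ k"
  shows "block_integral f k \<le> ennreal (2 powr (p + 1) *
    ((G * (1 + 2 * u * ln 2) powr (1/p)) powr p + (M * (1 + u * ln 2) powr (1/p) / (ln (7/8) + u * ln 2)) powr p))"
proof -
  define a where "a = tseq (Suc k)"
  define b where "b = tseq k"
  have ab: "0 < a" "a \<le> b / 2" "b \<le> 1"
    using tseq_pos tseq_Suc_le_half[of k] tseq_le_1[of k] by (auto simp: a_def b_def)
  have ln_a: "ln (a/2) = - (2 * u) * ln 2" and ln_b: "ln (b/2) = - u * ln 2"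
    using tseq_pos[of k] tseq_pos[of "Suc k"]
    by (simp_all add: a_def b_def ln_div ln_tseq u_def algebra_simps)
  have L: "0 < ln (7/8) + u * ln 2"
    using ln_b ab ln_less_cancel_iff[of "b/2" "7/8"] by simp
  have "(\<integral>\<^sup>+ s\<in>{a/2..b/2}. ennreal (dec_rearr \<Omega> g0 s powr p) \<partial>lborel)
      \<le> (\<integral>\<^sup>+ s\<in>{a/2..1}. ennreal (dec_rearr \<Omega> g0 s powr p) \<partial>lborel)"
    using ab by (intro nn_integral_mono) (auto simp: indicator_def)
  also have "\<dots> \<le> ennreal (G powr p * (1 + 2 * u * ln 2))"
    using nn_integral_dec_rearr_le_grand_norm[OF g0(2,3), of "a/2"] ab by (simp add: ln_a)
  finally have I0: "(\<integral>\<^sup>+ s\<in>{a/2..b/2}. ennreal (dec_rearr \<Omega> g0 s powr p) \<partial>lborel)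
      \<le> ennreal ((G * (1 + 2 * u * ln 2) powr (1/p)) powr p)"
    using g0(3) u_def p_pos by (simp add: powr_mult powr_powr)
  have "(\<integral>\<^sup>+ s\<in>{a/2..b/2}. ennreal (dec_rearr \<Omega> g1 s powr p) \<partial>lborel)
      \<le> (\<integral>\<^sup>+ s\<in>{0<..b/2}. ennreal (dec_rearr \<Omega> g1 s powr p) \<partial>lborel)"
    using ab by (intro nn_integral_mono) (auto simp: indicator_def)
  also have "\<dots> \<le> ennreal (M powr p * (1 + u * ln 2) / (ln (7/8) + u * ln 2) powr p)"
    using nn_integral_dec_rearr_le_small_norm[OF g1(2,3), of "b/2" "7/8"] ab
    by (simp add: ln_b)
  finally have I1: "(\<integral>\<^sup>+ s\<in>{a/2..b/2}. ennreal (dec_rearr \<Omega> g1 s powr p) \<partial>lborel)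
      \<le> ennreal ((M * (1 + u * ln 2) powr (1/p) / (ln (7/8) + u * ln 2)) powr p)"
    using g1(3) L u_def p_pos by (simp add: powr_mult powr_powr powr_divide)
  have "block_integral f k \<le> ennreal (2 powr (p + 1)) *
      ((\<integral>\<^sup>+ s\<in>{a/2..b/2}. ennreal (dec_rearr \<Omega> g0 s powr p) \<partial>lborel)
       + (\<integral>\<^sup>+ s\<in>{a/2..b/2}. ennreal (dec_rearr \<Omega> g1 s powr p) \<partial>lborel))"
    unfolding block_integral_def a_def[symmetric] b_def[symmetric]
    by (rule nn_integral_dec_rearr_add_le[OF f g0(1) g1(1) eq ab(1)])
  also have "\<dots> \<le> ennreal (2 powr (p + 1)) * (ennreal ((G * (1 + 2 * u * ln 2) powr (1/p)) powr p)
      + ennreal ((M * (1 + u * ln 2) powr (1/p) / (ln (7/8) + u * ln 2)) powr p))"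
    by (intro mult_left_mono add_mono I0 I1) auto
  finally show ?thesis by (simp add: ennreal_mult ennreal_plus[symmetric] del: ennreal_plus)
qed

lemma block_norm_le_decomposition:
  fixes f g0 g1 :: "'a \<Rightarrow> real"
  assumes f: "f \<in> borel_measurable (lebesgue_on \<Omega>)"
    and g0: "g0 \<in> grand_space \<Omega> p" and g1: "g1 \<in> small_space \<Omega> p"
    and eq: "\<And>x. x \<in> \<Omega> \<Longrightarrow> f x = g0 x + g1 x"
  shows "ennreal ((2 ^ k) powr (-1/p) * block_norm f k)
     \<le> ennreal 24 * (grand_norm \<Omega> p g0 + ennreal (1 / 2 ^ k) * small_norm \<Omega> p g1)"
proof -
  obtain G where G: "grand_norm \<Omega> p g0 = ennreal G" "0 \<le> G"
    using g0 by (cases "grand_norm \<Omega> p g0" rule: ennreal_cases) (auto simp: grand_space_def)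
  obtain M where M: "small_norm \<Omega> p g1 = ennreal M" "0 \<le> M"
    using g1 by (cases "small_norm \<Omega> p g1" rule: ennreal_cases) (auto simp: small_space_def)
  define u :: real where "u = 2 ^ k"
  have u: "1 \<le> u" by (simp add: u_def)
  define w0 where "w0 = (1 + 2 * u * ln 2) powr (1/p)"
  define w1 where "w1 = (1 + u * ln 2) powr (1/p) / (ln (7/8) + u * ln 2)"
  have w: "0 \<le> w0" "0 \<le> w1" "u powr (-1/p) * w0 \<le> 3" "u powr (-1/p) * w1 \<le> 6 / u"
    using log_weights_le[OF p_ge_1 u] by (auto simp: w0_def w1_def)
  have "block_integral f k \<le> ennreal (2 powr (p + 1) * ((G * w0) powr p + (M * w1) powr p))"
    using block_integral_le_norms[OF f _ G _ M eq] g0 g1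
    by (simp add: w0_def w1_def u_def grand_space_def small_space_def)
  then have "enn2real (block_integral f k) \<le> 2 powr (p + 1) * ((G * w0) powr p + (M * w1) powr p)"
    by (simp add: enn2real_leI)
  then have "block_norm f k \<le> 4 * (G * w0 + M * w1)"
    unfolding block_norm_def using G(2) M(2) w by (intro powr_root_sum_le p_ge_1) auto
  then have "u powr (-1/p) * block_norm f k \<le> u powr (-1/p) * (4 * (G * w0 + M * w1))"
    by (intro mult_left_mono) auto
  also have "\<dots> = 4 * (G * (u powr (-1/p) * w0) + M * (u powr (-1/p) * w1))"
    by (simp add: algebra_simps)
  also have "\<dots> \<le> 4 * (G * 3 + M * (6 / u))"
    using G(2) M(2) w by (intro mult_left_mono add_mono) auto
  also have "\<dots> \<le> 24 * (G + 1 / u * M)"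
    using G(2) by simp
  finally have "ennreal (u powr (-1/p) * block_norm f k) \<le> ennreal (24 * (G + 1 / u * M))"
    by (rule ennreal_leI)
  also have "\<dots> = ennreal 24 * (ennreal G + ennreal (1 / u) * ennreal M)"
    using G(2) M(2) u by (simp add: ennreal_mult[symmetric] ennreal_plus[symmetric] distrib_left
        del: ennreal_numeral ennreal_plus)
  finally show ?thesis by (simp add: G M u_def)
qed

lemma K_fun_ge_block_norm:
  assumes f: "f \<in> sum_space \<Omega> p" and t: "(1/2) ^ Suc k \<le> t"
  shows "ennreal ((2 ^ k) powr (-1/p) * block_norm f k / 48) \<le> K_fun \<Omega> p f t"
  unfolding K_fun_def
proof (rule INF_greatest, clarify)
  fix g0 g1 assume g0: "g0 \<in> grand_space \<Omega> p" and g1: "g1 \<in> small_space \<Omega> p"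
    and eq: "\<forall>x\<in>\<Omega>. f x = g0 x + g1 x"
  define v where "v = (2 ^ k) powr (-1/p) * block_norm f k"
  have v: "0 \<le> v" by (simp add: v_def block_norm_nonneg)
  have "1 / 2 ^ k = 2 * (1/2::real) ^ Suc k" by (simp add: power_divide)
  also have "\<dots> \<le> 2 * t" using t by simp
  moreover have "0 < t" using t by (rule less_le_trans[rotated]) simp
  ultimately have "ennreal (1 / 2 ^ k) \<le> 2 * ennreal t"
    using ennreal_leI[of "1 / 2 ^ k" "2 * t"] by (simp add: ennreal_mult)
  then have "ennreal v \<le> ennreal 24 * (grand_norm \<Omega> p g0 + (2 * ennreal t) * small_norm \<Omega> p g1)"
    using block_norm_le_decomposition[OF sum_space_measurable[OF f] g0 g1, of k] eq
    unfolding v_def by (auto elim!: order_trans intro!: mult_left_mono add_left_mono mult_right_mono)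
  also have "\<dots> \<le> ennreal 24 * (2 * grand_norm \<Omega> p g0 + (2 * ennreal t) * small_norm \<Omega> p g1)"
    by (intro mult_left_mono add_right_mono) (auto intro: order.trans[OF _ mult_right_mono[of 1 2]])
  also have "\<dots> = ennreal 48 * (grand_norm \<Omega> p g0 + ennreal t * small_norm \<Omega> p g1)"
    by (simp add: distrib_left mult_ac ennreal_numeral[symmetric] ennreal_mult'[symmetric] del: ennreal_numeral)
  finally have "ennreal 48 * ennreal (v / 48) \<le> ennreal 48 * (grand_norm \<Omega> p g0 + ennreal t * small_norm \<Omega> p g1)"
    using ennreal_mult[of 48 "v/48"] v by simp
  then show "ennreal (v / 48) \<le> grand_norm \<Omega> p (fst (g0, g1)) + ennreal t * small_norm \<Omega> p (snd (g0, g1))"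
    by (subst (asm) ennreal_mult_le_mult_iff) auto
qed

lemma nn_integral_le_block_sum:
  fixes f :: "'a \<Rightarrow> real" and G :: "real \<Rightarrow> real"
  assumes f: "f \<in> borel_measurable (lebesgue_on \<Omega>)" and "k \<le> j"
    and G: "\<And>s. tseq (Suc j) \<le> s \<Longrightarrow> s \<le> tseq k \<Longrightarrow> 0 \<le> G s \<and> G s \<le> dec_rearr \<Omega> f s"
  shows "(\<integral>\<^sup>+ s\<in>{tseq (Suc j)..tseq k}. ennreal (G s powr p) \<partial>lborel)
     \<le> ennreal (\<Sum>i\<in>{k..j}. block_norm f i powr p)"
proof -
  have "(\<integral>\<^sup>+ s\<in>{tseq (Suc j)..tseq k}. ennreal (G s powr p) \<partial>lborel)
     \<le> (\<integral>\<^sup>+ s. (\<Sum>i\<in>{k..j}. ennreal (dec_rearr \<Omega> f s powr p) * indicator {tseq (Suc i)..tseq i} s) \<partial>lborel)"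
  proof (rule nn_integral_mono)
    fix s
    show "ennreal (G s powr p) * indicator {tseq (Suc j)..tseq k} s
        \<le> (\<Sum>i\<in>{k..j}. ennreal (dec_rearr \<Omega> f s powr p) * indicator {tseq (Suc i)..tseq i} s)"
    proof (cases "s \<in> {tseq (Suc j)..tseq k}")
      case True
      then have s: "tseq (Suc j) \<le> s" "s \<le> tseq k" by auto
      have "0 < s" using s tseq_pos[of "Suc j"] by linarith
      then obtain i where i: "k \<le> i" "tseq (Suc i) \<le> s" "s \<le> tseq i"
          "\<And>j'. k \<le> j' \<Longrightarrow> tseq (Suc j') \<le> s \<Longrightarrow> i \<le> j'"
        using tseq_interval_exists[OF _ s(2)] by blast
      have "i \<le> j" using i(4) \<open>k \<le> j\<close> s(1) by blast
      have "G s powr p \<le> dec_rearr \<Omega> f s powr p" using G[OF s] p_pos by (intro powr_mono2) auto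
      then have "ennreal (G s powr p) * indicator {tseq (Suc j)..tseq k} s
          \<le> ennreal (dec_rearr \<Omega> f s powr p) * indicator {tseq (Suc i)..tseq i} s"
        using True i by (auto intro: ennreal_leI)
      also have "\<dots> \<le> (\<Sum>i\<in>{k..j}. ennreal (dec_rearr \<Omega> f s powr p) * indicator {tseq (Suc i)..tseq i} s)"
        using i(1) \<open>i \<le> j\<close> by (intro member_le_sum) auto
      finally show ?thesis .
    qed simp
  qed
  also have "\<dots> = (\<Sum>i\<in>{k..j}. block_integral f i)"
    unfolding block_integral_def
    by (rule nn_integral_sum) (simp add: borel_measurable_dec_rearr_powr_indicator[OF f] tseq_pos)
  also have "\<dots> = ennreal (\<Sum>i\<in>{k..j}. block_norm f i powr p)"
    by (simp add: block_integral_real[OF f] sum_ennreal)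
  finally show ?thesis .
qed

text \<open>Cutting \<open>f\<close> at height \<open>f\<^sub>*(t\<^sub>k)\<close> splits it into a part supported on a set of
  measure at most \<open>t\<^sub>k\<close> and a part bounded by \<open>f\<^sub>*(t\<^sub>k)\<close>; this splitting nearly
  attains \<open>K(f, 2\<^sup>-\<^sup>k)\<close>.\<close>

definition trunc_level :: "('a \<Rightarrow> real) \<Rightarrow> nat \<Rightarrow> real" where
  "trunc_level f k = dec_rearr \<Omega> f (tseq k)"

definition upper_part :: "('a \<Rightarrow> real) \<Rightarrow> nat \<Rightarrow> 'a \<Rightarrow> real" where
  "upper_part f k x = (if trunc_level f k < \<bar>f x\<bar> then f x else 0)"

definition lower_part :: "('a \<Rightarrow> real) \<Rightarrow> nat \<Rightarrow> 'a \<Rightarrow> real" where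
  "lower_part f k x = (if trunc_level f k < \<bar>f x\<bar> then 0 else f x)"

lemma upper_part_add_lower_part: "f x = upper_part f k x + lower_part f k x"
  by (simp add: upper_part_def lower_part_def)

lemma upper_part_measurable:
  assumes [measurable]: "f \<in> borel_measurable (lebesgue_on \<Omega>)"
  shows "upper_part f k \<in> borel_measurable (lebesgue_on \<Omega>)"
  unfolding upper_part_def by measurable

lemma lower_part_measurable:
  assumes [measurable]: "f \<in> borel_measurable (lebesgue_on \<Omega>)"
  shows "lower_part f k \<in> borel_measurable (lebesgue_on \<Omega>)"
  unfolding lower_part_def by measurable

lemma trunc_level_nonneg: "f \<in> borel_measurable (lebesgue_on \<Omega>) \<Longrightarrow> 0 \<le> trunc_level f k"
  unfolding trunc_level_def using dec_rearr_nonneg tseq_pos by blast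

lemma trunc_level_powr_le:
  fixes f :: "'a \<Rightarrow> real"
  assumes f: "f \<in> borel_measurable (lebesgue_on \<Omega>)"
  shows "trunc_level f k powr p * tseq k \<le> 2 * block_norm f k powr p"
proof -
  define l where "l = trunc_level f k"
  have l: "0 \<le> l" using trunc_level_nonneg[OF f] by (simp add: l_def)
  have a: "0 < tseq (Suc k)" "tseq (Suc k) \<le> tseq k / 2" using tseq_pos tseq_Suc_le_half by auto
  have "ennreal (l powr p * (tseq k - tseq (Suc k)))
      = (\<integral>\<^sup>+ s. ennreal (l powr p) * indicator {tseq (Suc k)..tseq k} s \<partial>lborel)"
    using a by (simp add: nn_integral_cmult_indicator ennreal_mult)
  also have "\<dots> \<le> block_integral f k" unfolding block_integral_def
  proof (intro nn_integral_mono)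
    fix s
    show "ennreal (l powr p) * indicator {tseq (Suc k)..tseq k} s
        \<le> ennreal (dec_rearr \<Omega> f s powr p) * indicator {tseq (Suc k)..tseq k} s"
      using dec_rearr_antimono[OF f, of s "tseq k"] a l p_pos
      by (cases "s \<in> {tseq (Suc k)..tseq k}") (auto simp: l_def trunc_level_def intro!: ennreal_leI powr_mono2)
  qed
  finally have "l powr p * (tseq k - tseq (Suc k)) \<le> block_norm f k powr p"
    using a by (simp add: block_integral_real[OF f] ennreal_le_iff)
  moreover have "tseq k \<le> 2 * (tseq k - tseq (Suc k))" using a by simp
  then have "l powr p * tseq k \<le> 2 * (l powr p * (tseq k - tseq (Suc k)))"
    by (metis mult.left_commute mult_left_mono powr_ge_zero)
  ultimately show ?thesis by (simp add: l_def)
qed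

lemma dec_rearr_upper_part:
  fixes f :: "'a \<Rightarrow> real"
  assumes f: "f \<in> borel_measurable (lebesgue_on \<Omega>)" and s: "0 < s"
  shows "0 \<le> dec_rearr \<Omega> (upper_part f k) s" "dec_rearr \<Omega> (upper_part f k) s \<le> dec_rearr \<Omega> f s"
    and "tseq k \<le> s \<Longrightarrow> dec_rearr \<Omega> (upper_part f k) s = 0"
proof -
  show nonneg: "0 \<le> dec_rearr \<Omega> (upper_part f k) s"
    by (rule dec_rearr_nonneg[OF upper_part_measurable[OF f] s])
  show "dec_rearr \<Omega> (upper_part f k) s \<le> dec_rearr \<Omega> f s"
    by (rule dec_rearr_dominated[OF f upper_part_measurable[OF f] _ s]) (simp add: upper_part_def)
  assume "tseq k \<le> s"
  have "dec_rearr \<Omega> (upper_part f k) s \<le> 0"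
  proof (rule dec_rearr_le_0[OF f upper_part_measurable[OF f]])
    show "\<And>x. x \<in> \<Omega> \<Longrightarrow> upper_part f k x \<noteq> 0 \<Longrightarrow> trunc_level f k < \<bar>f x\<bar>"
      by (auto simp: upper_part_def split: if_splits)
    show "distrib_fun f (trunc_level f k) \<le> s"
      using distrib_fun_dec_rearr_le[OF f tseq_pos[of k]] \<open>tseq k \<le> s\<close> by (simp add: trunc_level_def)
  qed
  then show "dec_rearr \<Omega> (upper_part f k) s = 0" using nonneg by simp
qed

lemma dec_rearr_lower_part:
  fixes f :: "'a \<Rightarrow> real"
  assumes f: "f \<in> borel_measurable (lebesgue_on \<Omega>)" and s: "0 < s"
  shows "0 \<le> dec_rearr \<Omega> (lower_part f k) s" "dec_rearr \<Omega> (lower_part f k) s \<le> dec_rearr \<Omega> f s"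
    and "dec_rearr \<Omega> (lower_part f k) s \<le> trunc_level f k"
proof -
  show "0 \<le> dec_rearr \<Omega> (lower_part f k) s"
    by (rule dec_rearr_nonneg[OF lower_part_measurable[OF f] s])
  show "dec_rearr \<Omega> (lower_part f k) s \<le> dec_rearr \<Omega> f s"
    by (rule dec_rearr_dominated[OF f lower_part_measurable[OF f] _ s]) (simp add: lower_part_def)
  show "dec_rearr \<Omega> (lower_part f k) s \<le> trunc_level f k"
    using s trunc_level_nonneg[OF f] by (intro dec_rearr_le_bound) (auto simp: lower_part_def)
qed

definition tail_sum :: "('a \<Rightarrow> real) \<Rightarrow> nat \<Rightarrow> ennreal" where
  "tail_sum f k = (\<Sum>i. if k \<le> i then ennreal ((2 ^ i) powr (-1/p) * block_norm f i) else 0)"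

lemma root_block_sum_le:
  "(\<Sum>i\<in>A. block_norm f i powr p) powr (1/p) \<le> (\<Sum>i\<in>A. block_norm f i)"
  using powr_sum_le_sum_powr[of A "\<lambda>i. block_norm f i powr p" "1/p"] p_ge_1
  by (simp add: powr_powr block_norm_nonneg)

lemma grand_term_upper_part_le:
  fixes f :: "'a \<Rightarrow> real"
  assumes f: "f \<in> borel_measurable (lebesgue_on \<Omega>)"
    and j: "k \<le> j" "tseq (Suc j) \<le> \<tau>" "\<tau> \<le> tseq j"
  shows "ennreal ((1 - ln \<tau>) powr (-1/p)) *
      enn_powr (\<integral>\<^sup>+ s\<in>{\<tau>..1}. ennreal (dec_rearr \<Omega> (upper_part f k) s powr p) \<partial>lborel) (1/p)
    \<le> ennreal (2 * (\<Sum>i\<in>{k..j}. (2 ^ i) powr (-1/p) * block_norm f i))"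
proof -
  define G where "G = dec_rearr \<Omega> (upper_part f k)"
  have \<tau>: "0 < \<tau>" using j tseq_pos[of "Suc j"] by linarith
  have "(\<integral>\<^sup>+ s\<in>{\<tau>..1}. ennreal (G s powr p) \<partial>lborel)
      \<le> (\<integral>\<^sup>+ s\<in>{tseq (Suc j)..tseq k}. ennreal (G s powr p) \<partial>lborel)"
  proof (rule nn_integral_mono)
    fix s
    show "ennreal (G s powr p) * indicator {\<tau>..1} s \<le> ennreal (G s powr p) * indicator {tseq (Suc j)..tseq k} s"
      using j \<tau> dec_rearr_upper_part(3)[OF f, of s k]
      by (cases "s \<in> {\<tau>..1}"; cases "s \<le> tseq k") (auto simp: G_def indicator_def)
  qed
  also have "\<dots> \<le> ennreal (\<Sum>i\<in>{k..j}. block_norm f i powr p)"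
  proof (rule nn_integral_le_block_sum[OF f j(1)])
    fix s assume "tseq (Suc j) \<le> s"
    then have "0 < s" using tseq_pos[of "Suc j"] by linarith
    then show "0 \<le> G s \<and> G s \<le> dec_rearr \<Omega> f s" using dec_rearr_upper_part(1,2)[OF f] by (simp add: G_def)
  qed
  finally have I: "(\<integral>\<^sup>+ s\<in>{\<tau>..1}. ennreal (G s powr p) \<partial>lborel)
      \<le> ennreal (\<Sum>i\<in>{k..j}. block_norm f i powr p)" .
  have "enn_powr (\<integral>\<^sup>+ s\<in>{\<tau>..1}. ennreal (G s powr p) \<partial>lborel) (1/p)
      \<le> ennreal ((\<Sum>i\<in>{k..j}. block_norm f i powr p) powr (1/p))"
    using enn_powr_mono[OF _ I, of "1/p"] p_pos by (simp add: sum_nonneg)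
  also have "\<dots> \<le> ennreal (\<Sum>i\<in>{k..j}. block_norm f i)"
    by (intro ennreal_leI root_block_sum_le)
  finally have "ennreal ((1 - ln \<tau>) powr (-1/p)) * enn_powr (\<integral>\<^sup>+ s\<in>{\<tau>..1}. ennreal (G s powr p) \<partial>lborel) (1/p)
      \<le> ennreal (2 * (2 ^ j) powr (-1/p)) * ennreal (\<Sum>i\<in>{k..j}. block_norm f i)"
    using log_weight_le[OF p_ge_1 \<tau> j(3)] by (intro mult_mono ennreal_leI) auto
  also have "\<dots> = ennreal (2 * (\<Sum>i\<in>{k..j}. (2 ^ j) powr (-1/p) * block_norm f i))"
    by (simp add: ennreal_mult[symmetric] sum_distrib_left sum_nonneg block_norm_nonneg mult.assoc)
  also have "\<dots> \<le> ennreal (2 * (\<Sum>i\<in>{k..j}. (2 ^ i) powr (-1/p) * block_norm f i))"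
  proof (intro ennreal_leI mult_left_mono sum_mono mult_right_mono)
    fix i assume "i \<in> {k..j}"
    then have "(2::real) ^ i \<le> 2 ^ j" by (intro power_increasing) auto
    then show "(2 ^ j) powr (-1/p) \<le> ((2::real) ^ i) powr (-1/p)" using p_pos by (intro powr_mono2') auto
  qed (auto simp: block_norm_nonneg)
  finally show ?thesis by (simp add: G_def)
qed

lemma grand_norm_upper_part_le:
  fixes f :: "'a \<Rightarrow> real"
  assumes f: "f \<in> borel_measurable (lebesgue_on \<Omega>)"
  shows "grand_norm \<Omega> p (upper_part f k) \<le> 2 * tail_sum f k"
  unfolding grand_norm_def
proof (rule SUP_least)
  fix \<tau> :: real assume "\<tau> \<in> {0<..<1}"
  then have \<tau>: "0 < \<tau>" "\<tau> < 1" by auto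
  show "ennreal ((1 - ln \<tau>) powr (-1/p)) *
      enn_powr (\<integral>\<^sup>+ s\<in>{\<tau>..1}. ennreal (dec_rearr \<Omega> (upper_part f k) s powr p) \<partial>lborel) (1/p)
      \<le> 2 * tail_sum f k"
  proof (cases "tseq k \<le> \<tau>")
    case True
    have "(\<lambda>s. ennreal (dec_rearr \<Omega> (upper_part f k) s powr p) * indicator {\<tau>..1} s) = (\<lambda>s. 0)"
      using True \<tau> dec_rearr_upper_part(3)[OF f] by (auto simp: indicator_def fun_eq_iff)
    then show ?thesis using p_pos by (simp del: times_ennreal.rep_eq)
  next
    case False
    then obtain j where j: "k \<le> j" "tseq (Suc j) \<le> \<tau>" "\<tau> \<le> tseq j"
      using tseq_interval_exists[OF \<tau>(1), of k] by (metis nle_le)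
    have "ennreal (2 * (\<Sum>i\<in>{k..j}. (2 ^ i) powr (-1/p) * block_norm f i))
        = 2 * (\<Sum>i\<in>{k..j}. if k \<le> i then ennreal ((2 ^ i) powr (-1/p) * block_norm f i) else 0)"
      by (simp add: ennreal_mult sum_nonneg block_norm_nonneg sum_ennreal[symmetric] del: sum_ennreal)
    also have "\<dots> \<le> 2 * tail_sum f k"
      unfolding tail_sum_def by (intro mult_left_mono sum_le_suminf) auto
    finally show ?thesis using grand_term_upper_part_le[OF f j] by (rule order_trans[rotated])
  qed
qed

lemma nn_integral_lower_part_le_level:
  fixes f :: "'a \<Rightarrow> real"
  assumes f: "f \<in> borel_measurable (lebesgue_on \<Omega>)" and \<tau>: "0 < \<tau>"
  shows "(\<integral>\<^sup>+ s\<in>{0<..\<tau>}. ennreal (dec_rearr \<Omega> (lower_part f k) s powr p) \<partial>lborel)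
    \<le> ennreal (trunc_level f k powr p * \<tau>)"
proof -
  have "(\<integral>\<^sup>+ s\<in>{0<..\<tau>}. ennreal (dec_rearr \<Omega> (lower_part f k) s powr p) \<partial>lborel)
      \<le> (\<integral>\<^sup>+ s. ennreal (trunc_level f k powr p) * indicator {0<..\<tau>} s \<partial>lborel)"
  proof (rule nn_integral_mono)
    fix s
    show "ennreal (dec_rearr \<Omega> (lower_part f k) s powr p) * indicator {0<..\<tau>} s
        \<le> ennreal (trunc_level f k powr p) * indicator {0<..\<tau>} s"
      using dec_rearr_lower_part(1,3)[OF f, of s k] p_pos
      by (cases "s \<in> {0<..\<tau>}") (auto intro!: ennreal_leI powr_mono2)
  qed
  also have "\<dots> = ennreal (trunc_level f k powr p * \<tau>)"
    using \<tau> by (simp add: nn_integral_cmult_indicator ennreal_mult)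
  finally show ?thesis .
qed

lemma trunc_level_add_block_sum_le:
  fixes f :: "'a \<Rightarrow> real"
  assumes f: "f \<in> borel_measurable (lebesgue_on \<Omega>)" and "j \<le> k"
  shows "trunc_level f (Suc k) powr p * tseq (Suc k) + (\<Sum>i\<in>{j..k}. block_norm f i powr p)
    \<le> 2 * (\<Sum>i\<in>{j..Suc k}. block_norm f i powr p)"
proof -
  have "{j..Suc k} = insert (Suc k) {j..k}" using assms by auto
  then have "(\<Sum>i\<in>{j..Suc k}. block_norm f i powr p) = block_norm f (Suc k) powr p + (\<Sum>i\<in>{j..k}. block_norm f i powr p)"
    by simp
  moreover have "0 \<le> (\<Sum>i\<in>{j..k}. block_norm f i powr p)" by (intro sum_nonneg) auto
  ultimately show ?thesis using trunc_level_powr_le[OF f, of "Suc k"] by linarith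
qed

lemma nn_integral_lower_part_le_blocks:
  fixes f :: "'a \<Rightarrow> real"
  assumes f: "f \<in> borel_measurable (lebesgue_on \<Omega>)" and "j < k" and \<tau>: "0 < \<tau>" "\<tau> \<le> tseq j"
  shows "(\<integral>\<^sup>+ s\<in>{0<..\<tau>}. ennreal (dec_rearr \<Omega> (lower_part f k) s powr p) \<partial>lborel)
     \<le> ennreal (2 * (\<Sum>i\<in>{j..k}. block_norm f i powr p))"
proof -
  obtain k' where k': "k = Suc k'" "j \<le> k'" using \<open>j < k\<close> by (cases k) auto
  define G where "G = dec_rearr \<Omega> (lower_part f k)"
  define l where "l = trunc_level f k"
  have "(\<integral>\<^sup>+ s\<in>{0<..\<tau>}. ennreal (G s powr p) \<partial>lborel)
      \<le> (\<integral>\<^sup>+ s. ennreal (l powr p) * indicator {0<..tseq k} s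
          + ennreal (G s powr p) * indicator {tseq (Suc k')..tseq j} s \<partial>lborel)"
  proof (rule nn_integral_mono)
    fix s
    show "ennreal (G s powr p) * indicator {0<..\<tau>} s
        \<le> ennreal (l powr p) * indicator {0<..tseq k} s + ennreal (G s powr p) * indicator {tseq (Suc k')..tseq j} s"
    proof (cases "s \<in> {0<..\<tau>} \<and> s \<le> tseq k")
      case True
      then have "G s powr p \<le> l powr p"
        using dec_rearr_lower_part(1,3)[OF f] p_pos by (intro powr_mono2) (auto simp: G_def l_def)
      then show ?thesis using True by (auto intro: add_increasing2 ennreal_leI)
    next
      case False
      then show ?thesis using \<tau> k' by (auto simp: indicator_def intro: add_increasing)
    qed
  qed
  also have "\<dots> = ennreal (l powr p * tseq k)
      + (\<integral>\<^sup>+ s\<in>{tseq (Suc k')..tseq j}. ennreal (G s powr p) \<partial>lborel)"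
    using tseq_pos[of k] tseq_pos[of "Suc k'"]
    by (subst nn_integral_add)
      (auto simp: G_def nn_integral_cmult_indicator ennreal_mult
        intro!: borel_measurable_dec_rearr_powr_indicator lower_part_measurable f)
  also have "(\<integral>\<^sup>+ s\<in>{tseq (Suc k')..tseq j}. ennreal (G s powr p) \<partial>lborel)
      \<le> ennreal (\<Sum>i\<in>{j..k'}. block_norm f i powr p)"
  proof (rule nn_integral_le_block_sum[OF f k'(2)])
    fix s assume "tseq (Suc k') \<le> s"
    then have "0 < s" using tseq_pos[of "Suc k'"] by linarith
    then show "0 \<le> G s \<and> G s \<le> dec_rearr \<Omega> f s" using dec_rearr_lower_part(1,2)[OF f] by (simp add: G_def)
  qed
  also have "ennreal (l powr p * tseq k) + ennreal (\<Sum>i\<in>{j..k'}. block_norm f i powr p)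
      \<le> ennreal (2 * (\<Sum>i\<in>{j..k}. block_norm f i powr p))"
    using trunc_level_add_block_sum_le[OF f k'(2)] tseq_pos[of k] k'(1)
    by (simp add: l_def ennreal_plus[symmetric] ennreal_leI sum_nonneg del: ennreal_plus)
  finally show ?thesis by (simp add: G_def add_mono)
qed

lemma small_integrand_lower_part_le_level:
  fixes f :: "'a \<Rightarrow> real"
  assumes f: "f \<in> borel_measurable (lebesgue_on \<Omega>)" and \<tau>: "0 < \<tau>" "\<tau> < 1"
  shows "ennreal ((1 - ln \<tau>) powr (-1/p)) *
      enn_powr (\<integral>\<^sup>+ s\<in>{0<..\<tau>}. ennreal (dec_rearr \<Omega> (lower_part f k) s powr p) \<partial>lborel) (1/p) * ennreal (1 / \<tau>)
    \<le> ennreal (trunc_level f k * \<tau> powr (1/p - 1))"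
proof -
  define l where "l = trunc_level f k"
  have l: "0 \<le> l" using trunc_level_nonneg[OF f] by (simp add: l_def)
  have "ln \<tau> < 0" using \<tau> by (intro ln_less_zero) auto
  then have w: "(1 - ln \<tau>) powr (-1/p) \<le> 1"
    using powr_mono2'[of "-1/p" 1 "1 - ln \<tau>"] p_pos by simp
  have "enn_powr (\<integral>\<^sup>+ s\<in>{0<..\<tau>}. ennreal (dec_rearr \<Omega> (lower_part f k) s powr p) \<partial>lborel) (1/p)
      \<le> enn_powr (ennreal (l powr p * \<tau>)) (1/p)"
    using nn_integral_lower_part_le_level[OF f \<tau>(1), of k] p_pos by (intro enn_powr_mono) (auto simp: l_def)
  also have "\<dots> = ennreal (l * \<tau> powr (1/p))"
    using l \<tau> p_pos by (simp add: powr_mult powr_powr)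
  finally have "ennreal ((1 - ln \<tau>) powr (-1/p)) *
      enn_powr (\<integral>\<^sup>+ s\<in>{0<..\<tau>}. ennreal (dec_rearr \<Omega> (lower_part f k) s powr p) \<partial>lborel) (1/p) * ennreal (1 / \<tau>)
    \<le> ennreal 1 * ennreal (l * \<tau> powr (1/p)) * ennreal (1 / \<tau>)"
    using w by (intro mult_right_mono mult_mono ennreal_leI) auto
  also have "\<dots> = ennreal (l * \<tau> powr (1/p - 1))"
    using \<tau> l by (simp add: ennreal_mult[symmetric] powr_diff)
  finally show ?thesis by (simp add: l_def)
qed

lemma small_integrand_lower_part_le_blocks:
  fixes f :: "'a \<Rightarrow> real"
  assumes f: "f \<in> borel_measurable (lebesgue_on \<Omega>)" and "j < k"
    and \<tau>: "0 < \<tau>" "\<tau> \<le> tseq j"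
  shows "ennreal ((1 - ln \<tau>) powr (-1/p)) *
      enn_powr (\<integral>\<^sup>+ s\<in>{0<..\<tau>}. ennreal (dec_rearr \<Omega> (lower_part f k) s powr p) \<partial>lborel) (1/p) * ennreal (1 / \<tau>)
    \<le> ennreal (4 * (2 ^ j) powr (-1/p) * (\<Sum>i\<in>{j..k}. block_norm f i) * (1 / \<tau>))"
proof -
  have "enn_powr (\<integral>\<^sup>+ s\<in>{0<..\<tau>}. ennreal (dec_rearr \<Omega> (lower_part f k) s powr p) \<partial>lborel) (1/p)
      \<le> enn_powr (ennreal (2 * (\<Sum>i\<in>{j..k}. block_norm f i powr p))) (1/p)"
    using nn_integral_lower_part_le_blocks[OF f \<open>j < k\<close> \<tau>] p_pos by (intro enn_powr_mono) auto
  also have "\<dots> = ennreal (2 powr (1/p) * (\<Sum>i\<in>{j..k}. block_norm f i powr p) powr (1/p))"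
    by (simp add: sum_nonneg powr_mult)
  also have "\<dots> \<le> ennreal (2 * (\<Sum>i\<in>{j..k}. block_norm f i))"
    using powr_mono[of "1/p" 1 "2::real"] p_ge_1 root_block_sum_le
    by (intro ennreal_leI mult_mono) (auto simp: sum_nonneg block_norm_nonneg)
  finally have "ennreal ((1 - ln \<tau>) powr (-1/p)) *
      enn_powr (\<integral>\<^sup>+ s\<in>{0<..\<tau>}. ennreal (dec_rearr \<Omega> (lower_part f k) s powr p) \<partial>lborel) (1/p) * ennreal (1 / \<tau>)
    \<le> ennreal (2 * (2 ^ j) powr (-1/p)) * ennreal (2 * (\<Sum>i\<in>{j..k}. block_norm f i)) * ennreal (1 / \<tau>)"
    using log_weight_le[OF p_ge_1 \<tau>] by (intro mult_right_mono mult_mono ennreal_leI) auto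
  then show ?thesis
    using \<tau> by (simp add: ennreal_mult[symmetric] sum_nonneg block_norm_nonneg mult_ac)
qed

lemma small_integrand_lower_part_le:
  fixes f :: "'a \<Rightarrow> real" and k :: nat
  assumes f: "f \<in> borel_measurable (lebesgue_on \<Omega>)" and \<tau>: "0 < \<tau>" "\<tau> < 1"
  defines "c j \<equiv> 4 * (2 ^ j) powr (-1/p) * (\<Sum>i\<in>{j..k}. block_norm f i)"
  shows "ennreal ((1 - ln \<tau>) powr (-1/p)) *
      enn_powr (\<integral>\<^sup>+ s\<in>{0<..\<tau>}. ennreal (dec_rearr \<Omega> (lower_part f k) s powr p) \<partial>lborel) (1/p) * ennreal (1 / \<tau>)
    \<le> ennreal (trunc_level f k * \<tau> powr (1/p - 1)) * indicator {0..tseq k} \<tau>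
      + (\<Sum>j<k. ennreal (c j) * (ennreal (1 / \<tau>) * indicator {tseq (Suc j)..tseq j} \<tau>))"
    (is "?I \<le> ?A + (\<Sum>j<k. ?B j)")
proof (cases "\<tau> \<le> tseq k")
  case True
  then show ?thesis
    using small_integrand_lower_part_le_level[OF f \<tau>] \<tau> by (simp add: add_increasing2)
next
  case False
  obtain j where j: "tseq (Suc j) \<le> \<tau>" "\<tau> \<le> tseq j"
    using tseq_interval_exists[of \<tau> 0] \<tau> by auto
  have "j < k"
  proof (rule ccontr)
    assume "\<not> j < k"
    then have "tseq j \<le> tseq k" by (intro tseq_antimono) auto
    then show False using j False by linarith
  qed
  have "?I \<le> ennreal (c j * (1 / \<tau>))"
    using small_integrand_lower_part_le_blocks[OF f \<open>j < k\<close> \<tau>(1) j(2)] by (simp add: c_def)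
  also have "\<dots> = ?B j"
  proof -
    have "0 \<le> c j" unfolding c_def by (intro mult_nonneg_nonneg sum_nonneg block_norm_nonneg) auto
    then show ?thesis using \<tau> j by (simp add: ennreal_mult[symmetric])
  qed
  also have "\<dots> \<le> (\<Sum>j<k. ?B j)" using \<open>j < k\<close> by (intro member_le_sum) auto
  finally show ?thesis by (simp add: add_increasing)
qed

lemma small_norm_lower_part_le_sum:
  fixes f :: "'a \<Rightarrow> real"
  assumes f: "f \<in> borel_measurable (lebesgue_on \<Omega>)"
  shows "small_norm \<Omega> p (lower_part f k) \<le> ennreal (p * trunc_level f k * tseq k powr (1/p)
     + (\<Sum>j<k. 4 * (2 ^ j) powr (-1/p) * (\<Sum>i\<in>{j..k}. block_norm f i) * (2 ^ j * ln 2)))"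
proof -
  define l where "l = trunc_level f k"
  have l: "0 \<le> l" using trunc_level_nonneg[OF f] by (simp add: l_def)
  define c where "c j = 4 * (2 ^ j) powr (-1/p) * (\<Sum>i\<in>{j..k}. block_norm f i)" for j
  have c: "0 \<le> c j" for j
    unfolding c_def by (intro mult_nonneg_nonneg sum_nonneg block_norm_nonneg) auto
  define A where "A \<tau> = ennreal (l * \<tau> powr (1/p - 1)) * indicator {0..tseq k} \<tau>" for \<tau>
  define B where "B j \<tau> = ennreal (c j) * (ennreal (1 / \<tau>) * indicator {tseq (Suc j)..tseq j} \<tau>)" for j \<tau>
  have "small_norm \<Omega> p (lower_part f k) \<le> (\<integral>\<^sup>+ \<tau>. A \<tau> + (\<Sum>j<k. B j \<tau>) \<partial>lborel)"
    unfolding small_norm_def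
  proof (rule nn_integral_mono)
    fix \<tau> :: real
    show "ennreal ((1 - ln \<tau>) powr (-1/p)) *
        enn_powr (\<integral>\<^sup>+ s\<in>{0<..\<tau>}. ennreal (dec_rearr \<Omega> (lower_part f k) s powr p) \<partial>lborel) (1/p)
        * ennreal (1 / \<tau>) * indicator {0<..<1} \<tau> \<le> A \<tau> + (\<Sum>j<k. B j \<tau>)"
      using small_integrand_lower_part_le[OF f, of \<tau> k]
      by (cases "\<tau> \<in> {0<..<1}") (simp_all add: A_def B_def l_def c_def)
  qed
  also have "\<dots> = (\<integral>\<^sup>+ \<tau>. A \<tau> \<partial>lborel) + (\<Sum>j<k. \<integral>\<^sup>+ \<tau>. B j \<tau> \<partial>lborel)"
    unfolding A_def B_def by (subst nn_integral_add) (auto simp: nn_integral_sum)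
  also have "(\<integral>\<^sup>+ \<tau>. A \<tau> \<partial>lborel) = ennreal (p * l * tseq k powr (1/p))"
    unfolding A_def using nn_integral_powr[of "tseq k" "1/p - 1" l] p_pos l tseq_pos[of k] by simp
  also have "(\<Sum>j<k. \<integral>\<^sup>+ \<tau>. B j \<tau> \<partial>lborel) = ennreal (\<Sum>j<k. c j * (2 ^ j * ln 2))"
  proof -
    have "(\<integral>\<^sup>+ \<tau>. B j \<tau> \<partial>lborel) = ennreal (c j * (2 ^ j * ln 2))" for j
    proof -
      have "ln (tseq j) - ln (tseq (Suc j)) = 2 ^ j * ln 2" by (simp add: ln_tseq algebra_simps)
      then show ?thesis unfolding B_def using c[of j]
        by (subst nn_integral_cmult) (auto simp: nn_integral_inverse tseq_pos tseq_antimono ennreal_mult)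
    qed
    then show ?thesis using c by (simp add: sum_ennreal)
  qed
  finally show ?thesis using c l p_pos by (simp add: c_def l_def sum_nonneg)
qed

definition head_sum :: "('a \<Rightarrow> real) \<Rightarrow> nat \<Rightarrow> real" where
  "head_sum f k = (\<Sum>i\<le>k. (2 ^ i) powr (1 - 1/p) * block_norm f i)"

definition lower_part_const :: real where
  "lower_part_const = 2 * p + 4 * (2 powr (1 - 1/p) / (2 powr (1 - 1/p) - 1))"

lemma head_sum_nonneg: "0 \<le> head_sum f k"
  unfolding head_sum_def by (intro sum_nonneg) (simp add: block_norm_nonneg)

lemma lower_part_const_pos: "0 < lower_part_const"
proof -
  have "1 < (2::real) powr (1 - 1/p)" using p_gt_1 by (intro gr_one_powr) auto
  then show ?thesis using p_pos unfolding lower_part_const_def by (simp add: add_pos_nonneg)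
qed

lemma small_norm_lower_part_le:
  fixes f :: "'a \<Rightarrow> real"
  assumes f: "f \<in> borel_measurable (lebesgue_on \<Omega>)"
  shows "small_norm \<Omega> p (lower_part f k) \<le> ennreal (lower_part_const * head_sum f k)"
proof -
  define l where "l = trunc_level f k"
  have l: "0 \<le> l" using trunc_level_nonneg[OF f] by (simp add: l_def)
  have "l * tseq k powr (1/p) = (l powr p * tseq k) powr (1/p)"
    using l tseq_pos[of k] p_pos by (simp add: powr_mult powr_powr)
  also have "\<dots> \<le> (2 * block_norm f k powr p) powr (1/p)"
    using trunc_level_powr_le[OF f, of k] tseq_pos[of k] p_pos by (intro powr_mono2) (auto simp: l_def)
  also have "\<dots> = 2 powr (1/p) * block_norm f k"
    using p_pos by (simp add: powr_mult powr_powr block_norm_nonneg)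
  also have "\<dots> \<le> 2 * ((2 ^ k) powr (1 - 1/p) * block_norm f k)"
    using powr_mono[of "1/p" 1 "2::real"] ge_one_powr_ge_zero[of "2 ^ k" "1 - 1/p"] p_ge_1
      block_norm_nonneg[of f k]
    by (intro mult_mono) (auto simp: mult_le_cancel_right1)
  also have "(2 ^ k) powr (1 - 1/p) * block_norm f k \<le> head_sum f k"
    unfolding head_sum_def by (intro member_le_sum) (auto simp: block_norm_nonneg)
  finally have level: "p * l * tseq k powr (1/p) \<le> 2 * p * head_sum f k"
    using p_pos by (simp add: mult.assoc mult_left_mono)
  have "small_norm \<Omega> p (lower_part f k) \<le> ennreal (p * l * tseq k powr (1/p)
     + (\<Sum>j<k. 4 * (2 ^ j) powr (-1/p) * (\<Sum>i\<in>{j..k}. block_norm f i) * (2 ^ j * ln 2)))"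
    using small_norm_lower_part_le_sum[OF f] by (simp add: l_def)
  also have "\<dots> \<le> ennreal (2 * p * head_sum f k + 4 * (2 powr (1 - 1/p) / (2 powr (1 - 1/p) - 1)) * head_sum f k)"
    unfolding head_sum_def
    by (intro ennreal_leI add_mono sum_weighted_tails_le block_norm_nonneg p_gt_1 level[unfolded head_sum_def])
  also have "\<dots> = ennreal (lower_part_const * head_sum f k)"
    by (simp add: lower_part_const_def algebra_simps)
  finally show ?thesis .
qed

lemma K_fun_le_tail_head:
  fixes f :: "'a \<Rightarrow> real"
  assumes f: "f \<in> borel_measurable (lebesgue_on \<Omega>)" and tail: "tail_sum f k < top" and t: "0 \<le> t"
  shows "K_fun \<Omega> p f t \<le> 2 * tail_sum f k + ennreal (t * (lower_part_const * head_sum f k))"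
proof -
  have g0: "grand_norm \<Omega> p (upper_part f k) \<le> 2 * tail_sum f k"
    by (rule grand_norm_upper_part_le[OF f])
  have g1: "small_norm \<Omega> p (lower_part f k) \<le> ennreal (lower_part_const * head_sum f k)"
    by (rule small_norm_lower_part_le[OF f])
  have "(upper_part f k, lower_part f k) \<in> {(g0, g1). g0 \<in> grand_space \<Omega> p \<and> g1 \<in> small_space \<Omega> p \<and>
        (\<forall>x\<in>\<Omega>. f x = g0 x + g1 x)}"
  proof (clarsimp, intro conjI)
    have "2 * tail_sum f k < top" using tail by (simp add: ennreal_mult_less_top)
    then show "upper_part f k \<in> grand_space \<Omega> p"
      using g0 upper_part_measurable[OF f] by (auto simp: grand_space_def intro: le_less_trans)
    show "lower_part f k \<in> small_space \<Omega> p"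
      using g1 lower_part_measurable[OF f] by (auto simp: small_space_def intro: le_less_trans)
  qed (simp add: upper_part_add_lower_part[symmetric])
  then have "K_fun \<Omega> p f t \<le> grand_norm \<Omega> p (upper_part f k) + ennreal t * small_norm \<Omega> p (lower_part f k)"
    unfolding K_fun_def by (rule INF_lower2) simp
  also have "\<dots> \<le> 2 * tail_sum f k + ennreal t * ennreal (lower_part_const * head_sum f k)"
    by (intro add_mono mult_left_mono g0 g1) auto
  finally show ?thesis
    using t lower_part_const_pos head_sum_nonneg by (simp add: ennreal_mult)
qed

end

section \<open>The interpolation norm\<close>

locale interpolation_scale = grand_small_couple +
  fixes \<theta> r :: real
  assumes \<theta>_pos: "0 < \<theta>" and \<theta>_less_1: "\<theta> < 1" and r_ge_1: "1 \<le> r"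
begin

lemma r_pos: "0 < r"
  using r_ge_1 by simp

text \<open>The \<open>r\<close>-th power of \<open>weighted_block f k\<close> is the \<open>k\<close>-th term of the series in the theorem.\<close>

definition weighted_block :: "('a \<Rightarrow> real) \<Rightarrow> nat \<Rightarrow> real" where
  "weighted_block f k = (2 ^ k) powr (\<theta> - 1/p) * block_norm f k"

lemma weighted_block_nonneg: "0 \<le> weighted_block f k"
  by (simp add: weighted_block_def block_norm_nonneg)

lemma interp_norm_powr_eq:
  "enn_powr (interp_norm \<Omega> p \<theta> r f) r =
   (\<integral>\<^sup>+ t\<in>{0<..<1}. enn_powr (ennreal (t powr (-\<theta>)) * K_fun \<Omega> p f t) r * ennreal (1 / t) \<partial>lborel)"
  unfolding interp_norm_def using r_pos by (simp add: enn_powr_powr_inverse)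

lemma interp_integrand_ge:
  assumes f: "f \<in> sum_space \<Omega> p" and t: "(1/2) ^ Suc k \<le> t" "t < (1/2) ^ k"
  shows "ennreal ((weighted_block f k / 48) powr r * 2 ^ k)
    \<le> enn_powr (ennreal (t powr (-\<theta>)) * K_fun \<Omega> p f t) r * ennreal (1 / t)"
proof -
  have t0: "0 < t" using t(1) by (rule less_le_trans[rotated]) simp
  define v where "v = (2 ^ k) powr (-1/p) * block_norm f k / 48"
  have v: "0 \<le> v" by (simp add: v_def block_norm_nonneg)
  have "((2::real) ^ k) powr \<theta> * (2 ^ k) powr (-1/p) = (2 ^ k) powr (\<theta> - 1/p)"
    unfolding powr_add[symmetric] by simp
  then have wv: "(2 ^ k) powr \<theta> * v = weighted_block f k / 48"
    unfolding v_def weighted_block_def by (metis mult.assoc times_divide_eq_right)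
  have "(2 ^ k) powr \<theta> \<le> t powr (- \<theta>)"
    using powr_mono2'[of "-\<theta>" t "(1/2)^k"] t0 t \<theta>_pos by (simp add: half_power_powr)
  then have "ennreal ((2 ^ k) powr \<theta>) * ennreal v \<le> ennreal (t powr (-\<theta>)) * K_fun \<Omega> p f t"
    using K_fun_ge_block_norm[OF f t(1)] unfolding v_def by (intro mult_mono ennreal_leI) auto
  then have "ennreal (weighted_block f k / 48) \<le> ennreal (t powr (-\<theta>)) * K_fun \<Omega> p f t"
    using v by (simp add: wv[symmetric] ennreal_mult)
  then have "enn_powr (ennreal (weighted_block f k / 48)) r
      \<le> enn_powr (ennreal (t powr (-\<theta>)) * K_fun \<Omega> p f t) r"
    using r_pos by (intro enn_powr_mono) auto
  moreover have "2 ^ k \<le> 1 / t"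
    using t(2) t0 by (simp add: field_simps power_divide)
  ultimately have "ennreal ((weighted_block f k / 48) powr r) * ennreal (2 ^ k)
      \<le> enn_powr (ennreal (t powr (-\<theta>)) * K_fun \<Omega> p f t) r * ennreal (1 / t)"
    using weighted_block_nonneg[of f k] by (intro mult_mono ennreal_leI) auto
  then show ?thesis by (simp add: ennreal_mult)
qed

lemma interp_norm_powr_ge:
  assumes f: "f \<in> sum_space \<Omega> p"
  shows "ennreal (48 powr (-r) / 2) * (\<Sum>k. ennreal (weighted_block f k powr r))
    \<le> enn_powr (interp_norm \<Omega> p \<theta> r f) r"
proof -
  have "(\<Sum>k. ennreal (48 powr (-r) / 2) * ennreal (weighted_block f k powr r))
      = (\<Sum>k. ennreal ((weighted_block f k / 48) powr r * 2 ^ k) * ennreal ((1/2) ^ Suc k))"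
  proof (intro suminf_cong)
    fix k
    have "48 powr (-r) / 2 * weighted_block f k powr r = (weighted_block f k / 48) powr r * 2 ^ k * (1/2) ^ Suc k"
      by (simp add: powr_divide powr_minus_divide power_divide field_simps weighted_block_nonneg)
    then show "ennreal (48 powr (-r) / 2) * ennreal (weighted_block f k powr r)
        = ennreal ((weighted_block f k / 48) powr r * 2 ^ k) * ennreal ((1/2) ^ Suc k)"
      by (simp add: ennreal_mult[symmetric])
  qed
  also have "\<dots> \<le> enn_powr (interp_norm \<Omega> p \<theta> r f) r"
    unfolding interp_norm_powr_eq by (intro nn_integral_ge_dyadic_sum interp_integrand_ge f)
  finally show ?thesis by simp
qed

lemma tail_sum_scaled:
  "ennreal ((2 ^ k) powr \<theta>) * tail_sum f k
    = (\<Sum>m. ennreal ((2 powr (-\<theta>)) ^ m) * ennreal (weighted_block f (m + k)))"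
proof -
  define H where "H m = ennreal ((2 powr (-\<theta>)) ^ m) * ennreal (weighted_block f (m + k))" for m
  have "ennreal ((2 ^ k) powr \<theta>) * tail_sum f k
      = (\<Sum>i. ennreal ((2 ^ k) powr \<theta>) * (if k \<le> i then ennreal ((2 ^ i) powr (-1/p) * block_norm f i) else 0))"
    unfolding tail_sum_def by (rule ennreal_suminf_cmult[symmetric])
  also have "\<dots> = (\<Sum>i. if k \<le> i then H (i - k) else 0)"
  proof (rule suminf_cong)
    fix i
    show "ennreal ((2 ^ k) powr \<theta>) * (if k \<le> i then ennreal ((2 ^ i) powr (-1/p) * block_norm f i) else 0)
        = (if k \<le> i then H (i - k) else 0)"
      using tail_weight_eq[of k i \<theta> p "block_norm f i"]
      by (simp add: H_def weighted_block_def ennreal_mult[symmetric] block_norm_nonneg)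
  qed
  also have "\<dots> = (\<Sum>m. H m)" by (rule ennreal_suminf_shift)
  finally show ?thesis by (simp add: H_def)
qed

lemma head_sum_scaled:
  "ennreal ((2 ^ k) powr \<theta> * (1/2) ^ k * head_sum f k)
    = (\<Sum>m. ennreal ((2 powr (\<theta> - 1)) ^ m) * (if m \<le> k then ennreal (weighted_block f (k - m)) else 0))"
proof -
  define g where "g i = (2 powr (\<theta> - 1)) ^ (k - i) * weighted_block f i" for i
  have "(2 ^ k) powr \<theta> * (1/2) ^ k * head_sum f k = (\<Sum>i\<le>k. g i)"
    unfolding head_sum_def sum_distrib_left
    by (rule sum.cong) (simp_all add: g_def weighted_block_def head_weight_eq)
  also have "\<dots> = (\<Sum>i<Suc k. g (Suc k - Suc i))"
    unfolding lessThan_Suc_atMost[symmetric] by (rule sum.nat_diff_reindex[symmetric])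
  also have "\<dots> = (\<Sum>m\<le>k. (2 powr (\<theta> - 1)) ^ m * weighted_block f (k - m))"
    unfolding lessThan_Suc_atMost by (rule sum.cong) (auto simp: g_def)
  finally have "ennreal ((2 ^ k) powr \<theta> * (1/2) ^ k * head_sum f k)
      = (\<Sum>m\<le>k. ennreal ((2 powr (\<theta> - 1)) ^ m) * ennreal (weighted_block f (k - m)))"
    by (simp add: weighted_block_nonneg ennreal_mult sum_ennreal[symmetric] del: sum_ennreal)
  moreover have "(\<Sum>m. ennreal ((2 powr (\<theta> - 1)) ^ m) * (if m \<le> k then ennreal (weighted_block f (k - m)) else 0))
      = (\<Sum>m\<le>k. ennreal ((2 powr (\<theta> - 1)) ^ m) * (if m \<le> k then ennreal (weighted_block f (k - m)) else 0))"
    by (rule suminf_finite) auto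
  ultimately show ?thesis by simp
qed

lemma tail_sum_less_top:
  assumes S: "(\<Sum>k. ennreal (weighted_block f k powr r)) < top"
  shows "tail_sum f k < top"
proof -
  define a where "a = (2::real) powr (-\<theta>)"
  have a: "0 \<le> a" "a < 1" using \<theta>_pos by (auto simp: a_def intro!: powr_less_one)
  have "tail_sum f k \<le> (\<Sum>i. ennreal (a ^ i) + ennreal (weighted_block f i powr r))"
    unfolding tail_sum_def
  proof (intro suminf_le summableI)
    fix i
    have "(2 ^ i) powr (-1/p) * block_norm f i = a ^ i * weighted_block f i"
      using tail_weight_eq[of 0 i \<theta> p "block_norm f i"] by (simp add: a_def weighted_block_def)
    also have "\<dots> \<le> a ^ i * (1 + weighted_block f i powr r)"
      using le_one_add_powr[OF weighted_block_nonneg r_ge_1] a by (intro mult_left_mono) auto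
    also have "\<dots> \<le> a ^ i + weighted_block f i powr r"
      using a power_le_one[of a i] by (simp add: distrib_left mult_left_le_one_le)
    finally show "(if k \<le> i then ennreal ((2 ^ i) powr (-1/p) * block_norm f i) else 0)
        \<le> ennreal (a ^ i) + ennreal (weighted_block f i powr r)"
      using a by (simp add: ennreal_plus[symmetric] ennreal_leI del: ennreal_plus)
  qed
  also have "\<dots> = (\<Sum>i. ennreal (a ^ i)) + (\<Sum>i. ennreal (weighted_block f i powr r))"
    by (rule suminf_add[symmetric]) auto
  also have "\<dots> < top" using S ennreal_suminf_geometric[OF a] by simp
  finally show ?thesis .
qed

lemma weighted_K_fun_le:
  fixes f :: "'a \<Rightarrow> real"
  assumes f: "f \<in> borel_measurable (lebesgue_on \<Omega>)" and tail: "tail_sum f k < top"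
    and t: "(1/2) ^ Suc k \<le> t" "t \<le> (1/2) ^ k"
  shows "ennreal (t powr (-\<theta>)) * K_fun \<Omega> p f t
    \<le> ennreal (2 powr \<theta>) * (2 * (ennreal ((2 ^ k) powr \<theta>) * tail_sum f k)
        + ennreal lower_part_const * ennreal ((2 ^ k) powr \<theta> * (1/2) ^ k * head_sum f k))"
proof -
  define c where "c = (2 ^ k) powr \<theta>"
  have c: "0 \<le> c" by (simp add: c_def)
  have t0: "0 < t" using t(1) by (rule less_le_trans[rotated]) simp
  have "K_fun \<Omega> p f t \<le> 2 * tail_sum f k + ennreal (t * (lower_part_const * head_sum f k))"
    using K_fun_le_tail_head[OF f tail] t0 by simp
  also have "\<dots> \<le> 2 * tail_sum f k + ennreal ((1/2) ^ k * (lower_part_const * head_sum f k))"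
    using t lower_part_const_pos head_sum_nonneg by (intro add_left_mono ennreal_leI mult_right_mono) auto
  finally have K: "K_fun \<Omega> p f t \<le> 2 * tail_sum f k + ennreal ((1/2) ^ k * (lower_part_const * head_sum f k))" .
  have "t powr (-\<theta>) \<le> ((1/2) ^ Suc k) powr (-\<theta>)"
    using powr_mono2'[of "-\<theta>" "(1/2)^Suc k" t] t \<theta>_pos by simp
  also have "\<dots> = 2 powr \<theta> * c"
    unfolding half_power_powr c_def by (simp add: powr_mult)
  finally have "ennreal (t powr (-\<theta>)) * K_fun \<Omega> p f t
      \<le> ennreal (2 powr \<theta> * c) * (2 * tail_sum f k + ennreal ((1/2) ^ k * (lower_part_const * head_sum f k)))"
    using K by (intro mult_mono ennreal_leI) auto
  also have "\<dots> = ennreal (2 powr \<theta>) * (2 * (ennreal c * tail_sum f k)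
      + ennreal lower_part_const * ennreal (c * (1/2) ^ k * head_sum f k))"
  proof -
    have e1: "ennreal (2 powr \<theta> * c) = ennreal (2 powr \<theta>) * ennreal c"
      using c by (simp add: ennreal_mult)
    have e2: "ennreal c * ennreal ((1/2) ^ k * (lower_part_const * head_sum f k))
        = ennreal lower_part_const * ennreal (c * (1/2) ^ k * head_sum f k)"
      using c lower_part_const_pos head_sum_nonneg by (simp add: ennreal_mult[symmetric] mult_ac)
    have e3: "ennreal c * (2 * tail_sum f k + ennreal ((1/2) ^ k * (lower_part_const * head_sum f k)))
        = 2 * (ennreal c * tail_sum f k) + ennreal c * ennreal ((1/2) ^ k * (lower_part_const * head_sum f k))"
      by (simp only: distrib_left mult.left_commute)
    show ?thesis unfolding e1 by (simp only: mult.assoc e3 e2)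
  qed
  finally show ?thesis by (simp add: c_def)
qed

lemma interp_integrand_le:
  fixes f :: "'a \<Rightarrow> real"
  assumes f: "f \<in> borel_measurable (lebesgue_on \<Omega>)" and tail: "tail_sum f k < top"
    and t: "(1/2) ^ Suc k \<le> t" "t \<le> (1/2) ^ k"
  shows "enn_powr (ennreal (t powr (-\<theta>)) * K_fun \<Omega> p f t) r * ennreal (1 / t)
    \<le> ennreal (2 powr (\<theta> * r)) * enn_powr (2 * (ennreal ((2 ^ k) powr \<theta>) * tail_sum f k)
        + ennreal lower_part_const * ennreal ((2 ^ k) powr \<theta> * (1/2) ^ k * head_sum f k)) r * ennreal (2 ^ Suc k)"
proof -
  have t0: "0 < t" using t(1) by (rule less_le_trans[rotated]) simp
  have "enn_powr (ennreal (t powr (-\<theta>)) * K_fun \<Omega> p f t) r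
      \<le> enn_powr (ennreal (2 powr \<theta>) * (2 * (ennreal ((2 ^ k) powr \<theta>) * tail_sum f k)
        + ennreal lower_part_const * ennreal ((2 ^ k) powr \<theta> * (1/2) ^ k * head_sum f k))) r"
    using weighted_K_fun_le[OF f tail t] r_pos by (intro enn_powr_mono) auto
  also have "\<dots> = ennreal (2 powr (\<theta> * r)) * enn_powr (2 * (ennreal ((2 ^ k) powr \<theta>) * tail_sum f k)
        + ennreal lower_part_const * ennreal ((2 ^ k) powr \<theta> * (1/2) ^ k * head_sum f k)) r"
    using r_pos by (simp add: enn_powr_mult powr_powr)
  finally show ?thesis
  proof (rule mult_mono)
    have "1 = 2 ^ Suc k * (1/2::real) ^ Suc k" by (simp add: power_mult_distrib[symmetric])
    also have "\<dots> \<le> 2 ^ Suc k * t" using t by (intro mult_left_mono) auto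
    finally show "ennreal (1 / t) \<le> ennreal (2 ^ Suc k)" using t0 by (intro ennreal_leI) (simp add: field_simps)
  qed auto
qed

text \<open>The constant of \<open>discrete_hardy_inequality\<close> for the ratio \<open>d\<^sup>2\<close>.\<close>

definition hardy_const :: "real \<Rightarrow> real" where
  "hardy_const d = (1 / (1 - d)) powr r / (1 - d powr r)"

lemma hardy_const_pos:
  assumes "0 \<le> d" "d < 1"
  shows "0 < hardy_const d"
  using assms powr_less_mono2[OF r_pos assms] by (simp add: hardy_const_def)

lemma sum_tail_powr_le:
  "(\<Sum>k. enn_powr (ennreal ((2 ^ k) powr \<theta>) * tail_sum f k) r)
    \<le> ennreal (hardy_const (2 powr (-\<theta>/2))) * (\<Sum>k. ennreal (weighted_block f k powr r))"
  unfolding tail_sum_scaled hardy_const_def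
proof (rule discrete_hardy_inequality[where d="2 powr (-\<theta>/2)", unfolded two_powr_half_square])
  show "2 powr (-\<theta>/2) < (1::real)" using \<theta>_pos by (intro powr_less_one) auto
  fix m
  show "(\<Sum>k. enn_powr (ennreal (weighted_block f (m + k))) r) \<le> (\<Sum>k. ennreal (weighted_block f k powr r))"
    using ennreal_suminf_shift_le[of "\<lambda>k. ennreal (weighted_block f k powr r)" m]
    by (simp add: weighted_block_nonneg add.commute)
qed (simp_all add: r_pos)

lemma sum_head_powr_le:
  "(\<Sum>k. enn_powr (ennreal ((2 ^ k) powr \<theta> * (1/2) ^ k * head_sum f k)) r)
    \<le> ennreal (hardy_const (2 powr ((\<theta> - 1)/2))) * (\<Sum>k. ennreal (weighted_block f k powr r))"
  unfolding head_sum_scaled hardy_const_def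
proof (rule discrete_hardy_inequality[where d="2 powr ((\<theta> - 1)/2)", unfolded two_powr_half_square])
  show "2 powr ((\<theta> - 1)/2) < (1::real)" using \<theta>_less_1 by (intro powr_less_one) auto
  fix m
  have "(\<Sum>k. enn_powr (if m \<le> k then ennreal (weighted_block f (k - m)) else 0) r)
      = (\<Sum>k. if m \<le> k then ennreal (weighted_block f (k - m) powr r) else 0)"
    by (rule suminf_cong) (simp add: weighted_block_nonneg r_pos)
  also have "\<dots> = (\<Sum>k. ennreal (weighted_block f k powr r))" by (rule ennreal_suminf_shift)
  finally show "(\<Sum>k. enn_powr (if m \<le> k then ennreal (weighted_block f (k - m)) else 0) r)
      \<le> (\<Sum>k. ennreal (weighted_block f k powr r))" by simp
qed (simp_all add: r_pos)

definition upper_const :: real where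
  "upper_const = 2 powr (\<theta> * r) * 2 powr r * (2 powr r * hardy_const (2 powr (-\<theta>/2))
     + lower_part_const powr r * hardy_const (2 powr ((\<theta> - 1)/2)))"

lemma upper_const_pos: "0 < upper_const"
  unfolding upper_const_def using \<theta>_pos \<theta>_less_1 lower_part_const_pos
  by (intro mult_pos_pos add_pos_pos hardy_const_pos powr_less_one) auto

lemma interp_norm_powr_le:
  assumes f: "f \<in> sum_space \<Omega> p"
  shows "enn_powr (interp_norm \<Omega> p \<theta> r f) r \<le> ennreal upper_const * (\<Sum>k. ennreal (weighted_block f k powr r))"
proof (cases "(\<Sum>k. ennreal (weighted_block f k powr r)) < top")
  case False
  then have "(\<Sum>k. ennreal (weighted_block f k powr r)) = top" using top.not_eq_extremum by blast
  then show ?thesis using upper_const_pos by (simp add: ennreal_mult_top)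
next
  case True
  define S where "S = (\<Sum>k. ennreal (weighted_block f k powr r))"
  define X where "X k = ennreal ((2 ^ k) powr \<theta>) * tail_sum f k" for k
  define Y where "Y k = ennreal ((2 ^ k) powr \<theta> * (1/2) ^ k * head_sum f k)" for k
  define C where "C = lower_part_const"
  have C: "0 \<le> C" using lower_part_const_pos by (simp add: C_def)
  have "enn_powr (interp_norm \<Omega> p \<theta> r f) r
      \<le> (\<Sum>k. (ennreal (2 powr (\<theta> * r)) * enn_powr (2 * X k + ennreal C * Y k) r * ennreal (2 ^ Suc k))
        * ennreal ((1/2) ^ Suc k))"
    unfolding interp_norm_powr_eq X_def Y_def C_def
    by (intro nn_integral_le_dyadic_sum interp_integrand_le sum_space_measurable[OF f]
        tail_sum_less_top[OF True])
  also have "\<dots> = (\<Sum>k. ennreal (2 powr (\<theta> * r)) * enn_powr (2 * X k + ennreal C * Y k) r)"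
  proof (rule suminf_cong)
    fix k
    have "ennreal (2 ^ Suc k) * ennreal ((1/2) ^ Suc k) = 1"
      by (simp add: ennreal_mult[symmetric] power_mult_distrib[symmetric])
    then show "ennreal (2 powr (\<theta> * r)) * enn_powr (2 * X k + ennreal C * Y k) r * ennreal (2 ^ Suc k)
        * ennreal ((1/2) ^ Suc k) = ennreal (2 powr (\<theta> * r)) * enn_powr (2 * X k + ennreal C * Y k) r"
      by (simp add: mult.assoc)
  qed
  also have "\<dots> \<le> (\<Sum>k. ennreal (2 powr (\<theta> * r)) * ennreal (2 powr r) *
      (ennreal (2 powr r) * enn_powr (X k) r + ennreal (C powr r) * enn_powr (Y k) r))"
    using enn_powr_two_add_le[OF C r_pos] by (intro suminf_le summableI) (simp add: mult.assoc mult_left_mono)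
  also have "\<dots> = ennreal (2 powr (\<theta> * r)) * ennreal (2 powr r) *
      (ennreal (2 powr r) * (\<Sum>k. enn_powr (X k) r) + ennreal (C powr r) * (\<Sum>k. enn_powr (Y k) r))"
    by (simp add: suminf_add[symmetric])
  also have "\<dots> \<le> ennreal (2 powr (\<theta> * r)) * ennreal (2 powr r) *
      (ennreal (2 powr r) * (ennreal (hardy_const (2 powr (-\<theta>/2))) * S)
       + ennreal (C powr r) * (ennreal (hardy_const (2 powr ((\<theta> - 1)/2))) * S))"
    unfolding S_def X_def Y_def by (intro mult_left_mono add_mono sum_tail_powr_le sum_head_powr_le) auto
  also have "\<dots> = ennreal upper_const * S"
  proof -
    have "0 \<le> hardy_const (2 powr (-\<theta>/2))" "0 \<le> hardy_const (2 powr ((\<theta> - 1)/2))"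
      using \<theta>_pos \<theta>_less_1 by (auto intro!: less_imp_le hardy_const_pos powr_less_one)
    then show ?thesis
      by (simp add: upper_const_def C_def ennreal_mult distrib_left distrib_right mult_ac)
  qed
  finally show ?thesis by (simp add: S_def)
qed

lemma sum_weighted_block_eq:
  assumes "f \<in> borel_measurable (lebesgue_on \<Omega>)"
  shows "(\<Sum>k. ennreal (2 powr (real k * r * (\<theta> - 1/p))) * enn_powr (block_integral f k) (r/p))
    = (\<Sum>k. ennreal (weighted_block f k powr r))"
proof (rule suminf_cong)
  fix k
  have "((2 ^ k) powr (\<theta> - 1/p)) powr r = (2::real) powr (real k * r * (\<theta> - 1/p))"
    by (simp add: two_power_powr powr_powr mult_ac)
  moreover have "enn_powr (block_integral f k) (r/p) = ennreal (block_norm f k powr r)"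
    using p_pos by (simp add: block_integral_real[OF assms] powr_powr block_norm_nonneg)
  ultimately show "ennreal (2 powr (real k * r * (\<theta> - 1/p))) * enn_powr (block_integral f k) (r/p)
      = ennreal (weighted_block f k powr r)"
    by (simp add: weighted_block_def powr_mult block_norm_nonneg ennreal_mult)
qed

lemma interp_norm_powr_equivalence:
  assumes f: "f \<in> sum_space \<Omega> p"
  defines "S \<equiv> \<Sum>k. ennreal (2 powr (real k * r * (\<theta> - 1/p))) * enn_powr (block_integral f k) (r/p)"
  shows "ennreal (48 powr (-r) / 2) * S \<le> enn_powr (interp_norm \<Omega> p \<theta> r f) r
    \<and> enn_powr (interp_norm \<Omega> p \<theta> r f) r \<le> ennreal upper_const * S"
  unfolding S_def sum_weighted_block_eq[OF sum_space_measurable[OF f]]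
  using interp_norm_powr_ge[OF f] interp_norm_powr_le[OF f] by simp

end

theorem corollary6p1:
  fixes \<Omega> :: "'a::euclidean_space set" and p \<theta> r :: real
  assumes "open \<Omega>" "bounded \<Omega>" "emeasure lebesgue \<Omega> = 1"
    and "1 < p" "0 < \<theta>" "\<theta> < 1" "1 \<le> r"
  defines "tk \<equiv> (\<lambda>k::nat. (2::real) powr (1 - 2 ^ k))"
  shows "\<exists>c C. 0 < c \<and> 0 < C \<and> (\<forall>f \<in> interp_space \<Omega> p \<theta> r.
     (let S = (\<Sum>k. ennreal (2 powr (real k * r * (\<theta> - 1/p))) *
                enn_powr (\<integral>\<^sup>+ s\<in>{tk (Suc k)..tk k}. ennreal (dec_rearr \<Omega> f s powr p) \<partial>lborel) (r/p))
      in ennreal c * S \<le> enn_powr (interp_norm \<Omega> p \<theta> r f) r \<and>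
         enn_powr (interp_norm \<Omega> p \<theta> r f) r \<le> ennreal C * S))"
proof -
  have "\<Omega> \<in> sets lebesgue" using lmeasurable_open[OF assms(2,1)] by (simp add: fmeasurableD)
  then interpret interpolation_scale \<Omega> p \<theta> r
    by unfold_locales (use assms in auto)
  have tk: "tk = tseq" by (simp add: tk_def tseq_def fun_eq_iff)
  have "0 < 48 powr (-r) / (2::real)" by simp
  with upper_const_pos interp_norm_powr_equivalence show ?thesis
    unfolding Let_def tk block_integral_def interp_space_def by blast
qed

end
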